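(* If $\varsigma\in\pi(\mathcal O(\mathcal E_Y))$, then $\varsigma$ has the boundary decomposition property.
   Context: Let $X$ be an infinite compact metric space, $\alpha:X\to X$ a minimal homeomorphism, $\mathscr V$ a Hermitian complex line bundle over $X$, and $Y\subset X$ closed with non-empty interior. $\mathcal E=\Gamma(\mathscr V,\alpha)$ is the Hilbert $C(X)$-bimodule of continuous sections of $\mathscr V$ with right action $(\xi f)(x)=\xi(x)f(x)$, right inner product $\langle\xi(x),\eta(x)\rangle_{\mathscr V_x}$, left action $f\cdot\xi=\xi\,(f\circ\alpha)$ and left inner product $\langle\eta,\xi\rangle\circ\alpha^{-1}$. $\mathcal E_Y=C_0(X\setminus Y)\mathcal E$ and $\mathcal O(\mathcal E_Y)$ is its Cuntz–Pimsner algebra (Katsura). For $y\in Y$ let $r_Y(y)=\min\{n\ge1:\alpha^n(y)\in Y\}$, with distinct values $r_1<\dots<r_K$, and $Y_k=\{y\in Y:r_Y(y)=r_k\}$. Let $\mathscr V^{(0)}=X\times\mathbb C$ and $\mathscr V^{(n)}=(\alpha^{n-1})^*\mathscr V\otimes\cdots\otimes\alpha^*\mathscr V\otimes\mathscr V$, so $\mathscr V^{(n)}_x=\mathscr V_{\alpha^{n-1}(x)}\otimes\cdots\otimes\mathscr V_x=\mathscr V^{(n-m)}_{\alpha^m(x)}\otimes\mathscr V^{(m)}_x$ for $0\le m\le n$. Let $\mathscr D^{(n)}=\mathscr V^{(0)}\oplus\cdots\oplus\mathscr V^{(n-1)}$, $\mathscr M_k=\mathrm{End}(\mathscr D^{(r_k)})|_{\overline{Y_k}}$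 and $\Gamma(\mathscr M_k)$ the C*-algebra of its continuous sections. $\pi_k:\mathcal O(\mathcal E_Y)\to\Gamma(\mathscr M_k)$ is the $*$-homomorphism determined, for $x\in\overline{Y_k}$ and $(a_0,\dots,a_{r_k-1})\in\mathscr D^{(r_k)}_x$, by $\pi_k(f)(x)(a_0,\dots,a_{r_k-1})=(f(x)a_0,\dots,f(\alpha^{r_k-1}(x))a_{r_k-1})$ for $f\in C(X)$ and $\pi_k(\xi)(x)(a_0,\dots,a_{r_k-1})=(0,\xi(x)\otimes a_0,\dots,\xi(\alpha^{r_k-2}(x))\otimes a_{r_k-2})$ for $\xi\in\mathcal E_Y$; $\pi=\oplus_{k=1}^K\pi_k$. Boundary decomposition property: $\varsigma=(\varsigma_1,\dots,\varsigma_K)\in\Gamma(\mathscr M_1)\oplus\dots\oplus\Gamma(\mathscr M_K)$ has it if for every $k$ and every $x\in\overline{Y_k}\setminus Y_k$ the following holds. There are indices $t_1,\dots,t_m<k$ with $r_{t_1}+\dots+r_{t_m}=r_k$ and $x\in Y_{t_1}\cap\alpha^{-r_{t_1}}(Y_{t_2})\cap\dots\cap\alpha^{-(r_{t_1}+\dots+r_{t_{m-1}})}(Y_{t_m})$. Let $R_0=0$, $R_s=r_{t_1}+\dots+r_{t_s}$, and identify the $s$-th component $\mathscr V^{(R_{s-1})}_x\oplus\dots\oplus\mathscr V^{(R_s-1)}_x$ of $\mathscr D^{(r_k)}_x$ with $\mathscr D^{(r_{t_s})}_{\alpha^{R_{s-1}}(x)}\otimes\mathscr V^{(R_{s-1})}_x$.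 The requirement is that $\varsigma_k(x)$ restricted to the $s$-th component equals $\varsigma_{t_s}(\alpha^{R_{s-1}}(x))\otimes\mathrm{id}_{\mathscr V^{(R_{s-1})}_x}$ for every $s=1,\dots,m$. *)

theory Defs
  imports "HOL-Analysis.Analysis"
begin

text \<open>A Hermitian line bundle over X is modelled (up to isometric isomorphism) as a
 subbundle of the trivial bundle X x C^n: its fibre at x is the range of a
 continuous rank-one orthogonal projection P x.  Order-n tensors are functions on
 index lists of length n; the list head is the factor attached to the largest
 iterate, i.e. V^(n)_x = V_{alpha^(n-1) x} (x) ... (x) V_x.\<close>

type_synonym 'n tensor = "'n list \<Rightarrow> complex"
type_synonym 'n dvec = "nat \<Rightarrow> 'n tensor"
type_synonym ('a, 'n) fam = "nat \<Rightarrow> 'a \<Rightarrow> 'n dvec \<Rightarrow> 'n dvec"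

definition minimal_homeo :: "'a::topological_space set \<Rightarrow> ('a \<Rightarrow> 'a) \<Rightarrow> bool" where
  "minimal_homeo X \<alpha> \<longleftrightarrow> (\<exists>\<beta>. homeomorphism X X \<alpha> \<beta>) \<and>
     (\<forall>Z. Z \<subseteq> X \<longrightarrow> closedin (top_of_set X) Z \<longrightarrow> \<alpha> ` Z = Z \<longrightarrow> Z = {} \<or> Z = X)"

definition line_bundle_proj :: "'a::metric_space set \<Rightarrow> ('a \<Rightarrow> complex^'n::finite^'n) \<Rightarrow> bool" where
  "line_bundle_proj X P \<longleftrightarrow> continuous_on X P \<and>
     (\<forall>x\<in>X. P x ** P x = P x \<and> (\<chi> i j. cnj (P x $ j $ i)) = P x \<and> (\<Sum>i\<in>UNIV. P x $ i $ i) = 1)"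

definition fibre :: "('a \<Rightarrow> complex^'n::finite^'n) \<Rightarrow> 'a \<Rightarrow> (complex^'n) set" where
  "fibre P x = {v. P x *v v = v}"

definition vtens :: "complex^'n \<Rightarrow> 'n tensor \<Rightarrow> 'n tensor" where
  "vtens v t = (\<lambda>l. case l of [] \<Rightarrow> 0 | i # l' \<Rightarrow> v $ i * t l')"

fun tens :: "(nat \<Rightarrow> complex^'n) \<Rightarrow> nat \<Rightarrow> 'n tensor" where
  "tens vs 0 = (\<lambda>l. if l = [] then 1 else 0)"
| "tens vs (Suc n) = vtens (vs n) (tens vs n)"

definition fibn :: "('a \<Rightarrow> complex^'n::finite^'n) \<Rightarrow> ('a \<Rightarrow> 'a) \<Rightarrow> nat \<Rightarrow> 'a \<Rightarrow> 'n tensor set" where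
  "fibn P \<alpha> n x = {(\<lambda>l. c * tens vs n l) | c vs. \<forall>j<n. vs j \<in> fibre P ((\<alpha> ^^ j) x)}"

definition ttens :: "nat \<Rightarrow> 'n tensor \<Rightarrow> 'n tensor \<Rightarrow> 'n tensor" where
  "ttens m s t = (\<lambda>l. if m \<le> length l then s (take (length l - m) l) * t (drop (length l - m) l) else 0)"

definition Dsp :: "('a \<Rightarrow> complex^'n::finite^'n) \<Rightarrow> ('a \<Rightarrow> 'a) \<Rightarrow> nat \<Rightarrow> 'a \<Rightarrow> 'n dvec set" where
  "Dsp P \<alpha> r x = {a. (\<forall>j<r. a j \<in> fibn P \<alpha> j x) \<and> (\<forall>j\<ge>r. a j = (\<lambda>_. 0))}"

definition ipD :: "nat \<Rightarrow> 'n::finite dvec \<Rightarrow> 'n dvec \<Rightarrow> complex" where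
  "ipD r a b = (\<Sum>j<r. \<Sum>l\<in>{l. length l = j}. cnj (a j l) * b j l)"

definition normD :: "nat \<Rightarrow> 'n::finite dvec \<Rightarrow> real" where
  "normD r a = sqrt (Re (ipD r a a))"

definition adjD :: "('a \<Rightarrow> complex^'n::finite^'n) \<Rightarrow> ('a \<Rightarrow> 'a) \<Rightarrow> nat \<Rightarrow> 'a
    \<Rightarrow> ('n dvec \<Rightarrow> 'n dvec) \<Rightarrow> 'n dvec \<Rightarrow> 'n dvec" where
  "adjD P \<alpha> r x T = (\<lambda>a. THE b. b \<in> Dsp P \<alpha> r x \<and> (\<forall>c\<in>Dsp P \<alpha> r x. ipD r (T c) a = ipD r c b))"

definition rY :: "('a \<Rightarrow> 'a) \<Rightarrow> 'a set \<Rightarrow> 'a \<Rightarrow> nat" where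
  "rY \<alpha> Y y = (LEAST n. 1 \<le> n \<and> (\<alpha> ^^ n) y \<in> Y)"

definition KK :: "('a \<Rightarrow> 'a) \<Rightarrow> 'a set \<Rightarrow> nat" where
  "KK \<alpha> Y = card (rY \<alpha> Y ` Y)"

definition rr :: "('a \<Rightarrow> 'a) \<Rightarrow> 'a set \<Rightarrow> nat \<Rightarrow> nat" where
  "rr \<alpha> Y k = sorted_list_of_set (rY \<alpha> Y ` Y) ! (k - 1)"

definition Yk :: "('a \<Rightarrow> 'a) \<Rightarrow> 'a set \<Rightarrow> nat \<Rightarrow> 'a set" where
  "Yk \<alpha> Y k = {y\<in>Y. rY \<alpha> Y y = rr \<alpha> Y k}"

definition sections :: "'a::metric_space set \<Rightarrow> ('a \<Rightarrow> complex^'n::finite^'n) \<Rightarrow> ('a \<Rightarrow> complex^'n) set" where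
  "sections X P = {\<xi>. continuous_on X \<xi> \<and> (\<forall>x\<in>X. \<xi> x \<in> fibre P x)}"

text \<open>E_Y = C_0(X \ Y) E, with left action f . xi = xi (f o alpha).\<close>
definition EY :: "'a::metric_space set \<Rightarrow> ('a \<Rightarrow> complex^'n::finite^'n) \<Rightarrow> ('a \<Rightarrow> 'a) \<Rightarrow> 'a set
    \<Rightarrow> ('a \<Rightarrow> complex^'n) set" where
  "EY X P \<alpha> Y = {(\<lambda>x. f (\<alpha> x) *s \<xi> x) | f \<xi>.
      continuous_on X (f :: 'a \<Rightarrow> complex) \<and> (\<forall>y\<in>Y. f y = 0) \<and> \<xi> \<in> sections X P}"

definition piC :: "('a \<Rightarrow> 'a) \<Rightarrow> 'a set \<Rightarrow> ('a \<Rightarrow> complex) \<Rightarrow> ('a, 'n) fam" where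
  "piC \<alpha> Y f = (\<lambda>k x a j. if j < rr \<alpha> Y k then (\<lambda>l. f ((\<alpha> ^^ j) x) * a j l) else (\<lambda>_. 0))"

definition piE :: "('a \<Rightarrow> 'a) \<Rightarrow> 'a set \<Rightarrow> ('a \<Rightarrow> complex^'n) \<Rightarrow> ('a, 'n) fam" where
  "piE \<alpha> Y \<xi> = (\<lambda>k x a j. if 0 < j \<and> j < rr \<alpha> Y k
       then vtens (\<xi> ((\<alpha> ^^ (j - 1)) x)) (a (j - 1)) else (\<lambda>_. 0))"

text \<open>The image pi(O(E_Y)): the C*-subalgebra of the direct sum of the section
 algebras generated by pi(C(X)) and pi(E_Y) (closure in the sup-norm).\<close>
inductive_set piImg :: "('a::metric_space \<Rightarrow> complex^'n::finite^'n) \<Rightarrow> ('a \<Rightarrow> 'a) \<Rightarrow> 'a set \<Rightarrow> 'a set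
    \<Rightarrow> ('a, 'n) fam set"
  for P :: "'a::metric_space \<Rightarrow> complex^'n::finite^'n" and \<alpha> X Y where
  gen_C: "continuous_on X f \<Longrightarrow> piC \<alpha> Y f \<in> piImg P \<alpha> X Y"
| gen_E: "\<xi> \<in> EY X P \<alpha> Y \<Longrightarrow> piE \<alpha> Y \<xi> \<in> piImg P \<alpha> X Y"
| add: "\<sigma> \<in> piImg P \<alpha> X Y \<Longrightarrow> \<tau> \<in> piImg P \<alpha> X Y \<Longrightarrow>
        (\<lambda>k x a j l. \<sigma> k x a j l + \<tau> k x a j l) \<in> piImg P \<alpha> X Y"
| smult: "\<sigma> \<in> piImg P \<alpha> X Y \<Longrightarrow> (\<lambda>k x a j l. c * \<sigma> k x a j l) \<in> piImg P \<alpha> X Y"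
| comp: "\<sigma> \<in> piImg P \<alpha> X Y \<Longrightarrow> \<tau> \<in> piImg P \<alpha> X Y \<Longrightarrow>
        (\<lambda>k x. \<sigma> k x \<circ> \<tau> k x) \<in> piImg P \<alpha> X Y"
| adj: "\<sigma> \<in> piImg P \<alpha> X Y \<Longrightarrow> (\<lambda>k x. adjD P \<alpha> (rr \<alpha> Y k) x (\<sigma> k x)) \<in> piImg P \<alpha> X Y"
| lim: "(\<And>n::nat. g n \<in> piImg P \<alpha> X Y) \<Longrightarrow>
        (\<forall>k\<in>{1..KK \<alpha> Y}. \<forall>x\<in>closure (Yk \<alpha> Y k). \<forall>a\<in>Dsp P \<alpha> (rr \<alpha> Y k) x.
            h k x a \<in> Dsp P \<alpha> (rr \<alpha> Y k) x) \<Longrightarrow>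
        (\<forall>e>0. \<exists>N. \<forall>n\<ge>N. \<forall>k\<in>{1..KK \<alpha> Y}. \<forall>x\<in>closure (Yk \<alpha> Y k). \<forall>a\<in>Dsp P \<alpha> (rr \<alpha> Y k) x.
            normD (rr \<alpha> Y k) (\<lambda>j l. g n k x a j l - h k x a j l) \<le> e * normD (rr \<alpha> Y k) a) \<Longrightarrow>
        h \<in> piImg P \<alpha> X Y"

text \<open>Embedding of D^(r)_{alpha^R x} (x) V^(R)_x as the block of positions R..R+r-1.\<close>
definition inj_comp :: "nat \<Rightarrow> nat \<Rightarrow> 'n dvec \<Rightarrow> 'n tensor \<Rightarrow> 'n dvec" where
  "inj_comp R r b c = (\<lambda>i. if R \<le> i \<and> i < R + r then ttens R (b (i - R)) c else (\<lambda>_. 0))"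

definition bdp :: "('a \<Rightarrow> complex^'n::finite^'n) \<Rightarrow> ('a::topological_space \<Rightarrow> 'a) \<Rightarrow> 'a set
    \<Rightarrow> ('a, 'n) fam \<Rightarrow> bool" where
  "bdp P \<alpha> Y \<sigma> \<longleftrightarrow>
    (\<forall>k\<in>{1..KK \<alpha> Y}. \<forall>x\<in>closure (Yk \<alpha> Y k) - Yk \<alpha> Y k. \<forall>ts.
      (\<forall>t\<in>set ts. 1 \<le> t \<and> t < k) \<and> sum_list (map (rr \<alpha> Y) ts) = rr \<alpha> Y k \<and>
      (\<forall>s<length ts. (\<alpha> ^^ sum_list (map (rr \<alpha> Y) (take s ts))) x \<in> Yk \<alpha> Y (ts ! s))
      \<longrightarrow> (\<forall>s<length ts.
            \<forall>b\<in>Dsp P \<alpha> (rr \<alpha> Y (ts ! s)) ((\<alpha> ^^ sum_list (map (rr \<alpha> Y) (take s ts))) x).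
            \<forall>c\<in>fibn P \<alpha> (sum_list (map (rr \<alpha> Y) (take s ts))) x.
              \<sigma> k x (inj_comp (sum_list (map (rr \<alpha> Y) (take s ts))) (rr \<alpha> Y (ts ! s)) b c)
              = inj_comp (sum_list (map (rr \<alpha> Y) (take s ts))) (rr \<alpha> Y (ts ! s))
                  (\<sigma> (ts ! s) ((\<alpha> ^^ sum_list (map (rr \<alpha> Y) (take s ts))) x) b) c))"

end

theory Submission
  imports Defs
begin

text \<open>
  Let x be a boundary point of Y_k. The orbit segment x, ..., alpha^(r_k - 1) x is the
  concatenation of return segments of lengths r_t1, ..., r_tm, and D^(r_k)_x is accordingly the
  orthogonal sum of blocks D^(r_t) \<otimes> V^(R). The property to be proved says that sigma_k(x) acts
  on each block through its first factor as sigma_t. It holds for the generators: pi(f) is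
  diagonal, and pi(xi) shifts by one step inside a block, while at the last position of a block it
  multiplies by xi at a point whose image under alpha lies in Y, where every xi in E_Y vanishes.
  The property is preserved by sums, scalar multiples and products, and by limits, which converge
  coordinatewise. For adjoints one uses that distinct blocks are orthogonal and that embedding a
  block multiplies inner products by the inner product of the V^(R) factors. Adjoints exist and
  are unique because the fibres of the line bundle are one-dimensional, so every D^(r)_x has an
  explicit orthogonal basis.
\<close>

lemma cnj_mult_self: "cnj z * z = complex_of_real ((cmod z)\<^sup>2)"
  by (subst complex_norm_square) (rule mult.commute)

lemma sum_cnj_mult_self_eq_0_iff:
  assumes "finite A"
  shows "(\<Sum>x\<in>A. cnj (f x) * f x) = 0 \<longleftrightarrow> (\<forall>x\<in>A. f x = 0)"
proof -
  have "(\<Sum>x\<in>A. cnj (f x) * f x) = complex_of_real (\<Sum>x\<in>A. (cmod (f x))\<^sup>2)"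
    by (simp only: of_real_sum cnj_mult_self)
  then show ?thesis
    using assms by (simp only: of_real_eq_0_iff sum_nonneg_eq_0_iff zero_le_power2) simp
qed

section \<open>One-dimensional fibres\<close>

lemma hermitian_idempotent_rank_one_defect:
  fixes p :: "'n::finite \<Rightarrow> 'n \<Rightarrow> complex"
  assumes idem: "\<And>a b. (\<Sum>k\<in>UNIV. p a k * p k b) = p a b"
    and herm: "\<And>a b. cnj (p b a) = p a b"
    and trace: "(\<Sum>i\<in>UNIV. p i i) = 1" and d: "p i i \<noteq> 0"
  defines "q a b \<equiv> p a b - p a i * p i b / p i i"
  shows "(\<Sum>a\<in>UNIV. \<Sum>b\<in>UNIV. cnj (q a b) * q a b) = 0"
proof -
  define d where "d = p i i"
  have d_real: "cnj d = d"
    using herm[of i i] by (simp add: d_def)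
  have d_sq: "(\<Sum>b\<in>UNIV. p i b * p b i) = d" "(\<Sum>b\<in>UNIV. p b i * p i b) = d"
    using idem[of i i] by (simp_all add: d_def mult.commute)
  \<comment> \<open>\<open>q\<close> is \<open>P\<close> minus the rank-one projection onto the \<open>i\<close>-th column of \<open>P\<close>; the square
      of its Hilbert--Schmidt norm expands into four sums, each equal to \<open>1\<close>\<close>
  have cnj_q: "cnj (q a b) = p b a - p b i * p i a / d" for a b
    using herm d_real by (simp add: q_def d_def)
  have "cnj (q a b) * q a b = p b a * p a b - p b a * p a i * p i b / d
      - p b i * p i a * p a b / d + (p i a * p a i) * (p b i * p i b) / (d * d)" for a b
    unfolding cnj_q using d by (simp add: q_def d_def field_simps)
  moreover have "(\<Sum>a\<in>UNIV. \<Sum>b\<in>UNIV. p b a * p a b) = 1"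
    using idem trace by (subst sum.swap) simp
  moreover have "(\<Sum>a\<in>UNIV. \<Sum>b\<in>UNIV. p b a * p a i * p i b / d) = 1"
  proof -
    have "(\<Sum>a\<in>UNIV. \<Sum>b\<in>UNIV. p b a * p a i * p i b / d)
        = (\<Sum>b\<in>UNIV. (\<Sum>a\<in>UNIV. p b a * p a i) * p i b / d)"
      by (subst sum.swap) (simp add: sum_distrib_right sum_divide_distrib)
    also have "\<dots> = (\<Sum>b\<in>UNIV. p i b * p b i) / d"
      using idem by (simp add: sum_divide_distrib mult.commute)
    finally show ?thesis
      using d_sq d by (simp add: d_def)
  qed
  moreover have "(\<Sum>a\<in>UNIV. \<Sum>b\<in>UNIV. p b i * p i a * p a b / d) = 1"
  proof -
    have "(\<Sum>a\<in>UNIV. \<Sum>b\<in>UNIV. p b i * p i a * p a b / d)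
        = (\<Sum>b\<in>UNIV. p b i * (\<Sum>a\<in>UNIV. p i a * p a b) / d)"
      by (subst sum.swap) (simp add: sum_distrib_left sum_divide_distrib mult.assoc)
    also have "\<dots> = (\<Sum>b\<in>UNIV. p b i * p i b) / d"
      by (simp only: idem sum_divide_distrib)
    finally show ?thesis
      using d_sq d by (simp add: d_def)
  qed
  moreover have "(\<Sum>a\<in>UNIV. \<Sum>b\<in>UNIV. (p i a * p a i) * (p b i * p i b) / (d * d)) = 1"
  proof -
    have "(\<Sum>a\<in>UNIV. \<Sum>b\<in>UNIV. (p i a * p a i) * (p b i * p i b) / (d * d))
        = (\<Sum>a\<in>UNIV. p i a * p a i) * (\<Sum>b\<in>UNIV. p i b * p b i) / (d * d)"
      by (simp add: sum_distrib_left sum_distrib_right sum_divide_distrib mult.commute)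
    then show ?thesis
      using d_sq d by (simp add: d_def)
  qed
  ultimately show ?thesis
    by (simp add: sum.distrib sum_subtractf)
qed

lemma hermitian_idempotent_trace_one_factor:
  fixes p :: "'n::finite \<Rightarrow> 'n \<Rightarrow> complex"
  assumes idem: "\<And>a b. (\<Sum>k\<in>UNIV. p a k * p k b) = p a b"
    and herm: "\<And>a b. cnj (p b a) = p a b"
    and trace: "(\<Sum>i\<in>UNIV. p i i) = 1"
  obtains i where "p i i \<noteq> 0" "\<And>a b. p a b = p a i * p i b / p i i"
proof -
  obtain i where d: "p i i \<noteq> 0"
    using trace by (metis (mono_tags, lifting) sum.neutral zero_neq_one)
  define q where "q a b = p a b - p a i * p i b / p i i" for a b
  have "(\<Sum>ab\<in>UNIV. cnj (case_prod q ab) * case_prod q ab) = 0"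
    using hermitian_idempotent_rank_one_defect[OF idem herm trace d]
    by (simp add: q_def sum.cartesian_product split_def)
  then have q_zero: "q a b = 0" for a b
    by (simp add: sum_cnj_mult_self_eq_0_iff)
  have "p a b = p a i * p i b / p i i" for a b
    using q_zero[of a b] unfolding q_def by (simp only: right_minus_eq)
  with d show ?thesis
    by (rule that)
qed

lemma rank_one_fixed_vector:
  fixes p :: "'n::finite \<Rightarrow> 'n \<Rightarrow> complex" and v :: "complex^'n"
  assumes factor: "\<And>a b. p a b = p a i * p i b / p i i"
    and fixed: "\<And>a. (\<Sum>b\<in>UNIV. p a b * v $ b) = v $ a"
  shows "v = ((\<Sum>b\<in>UNIV. p i b * v $ b) / p i i) *s (\<chi> a. p a i)"
proof -
  have "v $ a = (\<Sum>b\<in>UNIV. p a b * v $ b)" for a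
    using fixed[of a] by simp
  also have "\<dots>a = (\<Sum>b\<in>UNIV. p a i * (p i b * v $ b) / p i i)" for a
    by (rule sum.cong[OF refl]) (subst factor, simp)
  also have "\<dots>a = p a i * (\<Sum>b\<in>UNIV. p i b * v $ b) / p i i" for a
    by (simp add: sum_distrib_left sum_divide_distrib)
  also have "\<dots>a = (((\<Sum>b\<in>UNIV. p i b * v $ b) / p i i) *s (\<chi> a. p a i)) $ a" for a
    by simp
  finally show ?thesis
    unfolding vec_eq_iff by blast
qed

lemma line_bundle_fibre_one_dim:
  assumes "line_bundle_proj X P" "w \<in> X"
  shows "\<exists>u. u \<noteq> 0 \<and> u \<in> fibre P w \<and> (\<forall>v\<in>fibre P w. \<exists>c. v = c *s u)"
proof -
  define p where "p a b = P w $ a $ b" for a b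
  have P: "P w ** P w = P w" "(\<chi> i j. cnj (P w $ j $ i)) = P w" "(\<Sum>i\<in>UNIV. P w $ i $ i) = 1"
    using assms unfolding line_bundle_proj_def by blast+
  have idem: "(\<Sum>k\<in>UNIV. p a k * p k b) = p a b" for a b
    using arg_cong[OF P(1), of "\<lambda>M. M $ a $ b"] by (simp add: p_def matrix_matrix_mult_def)
  have herm: "cnj (p b a) = p a b" for a b
    using arg_cong[OF P(2), of "\<lambda>M. M $ a $ b"] by (simp add: p_def)
  have trace: "(\<Sum>i\<in>UNIV. p i i) = 1"
    using P(3) by (simp add: p_def)
  obtain i where d: "p i i \<noteq> 0" and factor: "\<And>a b. p a b = p a i * p i b / p i i"
    using hermitian_idempotent_trace_one_factor[OF idem herm trace] by blast
  have fixed: "v \<in> fibre P w \<longleftrightarrow> (\<forall>a. (\<Sum>b\<in>UNIV. p a b * v $ b) = v $ a)" for v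
    by (simp add: fibre_def vec_eq_iff matrix_vector_mult_def p_def)
  have "(\<chi> a. p a i) \<noteq> 0"
    using d by (metis vec_lambda_beta zero_index)
  moreover have "(\<chi> a. p a i) \<in> fibre P w"
    using idem by (simp add: fixed)
  moreover have "\<exists>c. v = c *s (\<chi> a. p a i)" if "v \<in> fibre P w" for v
    using rank_one_fixed_vector[of p i, OF factor] that fixed by blast
  ultimately show ?thesis
    by blast
qed

definition fibre_gen :: "('a \<Rightarrow> complex^'n::finite^'n) \<Rightarrow> 'a \<Rightarrow> complex^'n" where
  "fibre_gen P w = (SOME u. u \<noteq> 0 \<and> u \<in> fibre P w \<and> (\<forall>v\<in>fibre P w. \<exists>c. v = c *s u))"

lemma fibre_gen:
  assumes "line_bundle_proj X P" "w \<in> X"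
  shows "fibre_gen P w \<noteq> 0" "fibre_gen P w \<in> fibre P w" "v \<in> fibre P w \<Longrightarrow> \<exists>c. v = c *s fibre_gen P w"
  using someI_ex[OF line_bundle_fibre_one_dim[OF assms]] unfolding fibre_gen_def by blast+

lemma finite_lists_length [simp]: "finite {l::'n::finite list. length l = j}"
  using finite_lists_length_eq[of "UNIV::'n set" j] by simp

lemma tens_eq_0: "length l \<noteq> n \<Longrightarrow> tens vs n l = 0"
proof (induction n arbitrary: l)
  case (Suc n)
  then show ?case by (cases l) (auto simp: vtens_def)
qed simp

lemma tens_cong: "(\<And>m. m < n \<Longrightarrow> vs m = vs' m) \<Longrightarrow> tens vs n = tens vs' n"
  by (induction n) auto

lemma tens_nonzero: "(\<And>m. m < n \<Longrightarrow> vs m \<noteq> 0) \<Longrightarrow> \<exists>l. length l = n \<and> tens vs n l \<noteq> 0"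
proof (induction n)
  case (Suc n)
  then obtain l where l: "length l = n" "tens vs n l \<noteq> 0"
    by auto
  obtain i where "vs n $ i \<noteq> 0"
    using Suc.prems[of n] by (metis lessI vec_eq_iff zero_index)
  then show ?case
    using l by (intro exI[of _ "i # l"]) (simp add: vtens_def)
qed simp

lemma vtens_ttens: "vtens v (ttens R s c) = ttens R (vtens v s) c"
proof
  fix l :: "'a list"
  show "vtens v (ttens R s c) l = ttens R (vtens v s) c l"
  proof (cases l)
    case Nil
    then show ?thesis by (simp add: vtens_def ttens_def)
  next
    case (Cons a l')
    show ?thesis
    proof (cases "R \<le> length l'")
      case True
      then have "Suc (length l') - R = Suc (length l' - R)" by simp
      then show ?thesis using True Cons by (simp add: vtens_def ttens_def)
    next
      case False
      then show ?thesis using Cons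
        by (cases "R = Suc (length l')") (simp_all add: vtens_def ttens_def)
    qed
  qed
qed

lemma tens_split: "tens vs (R + i) = ttens R (tens (\<lambda>m. vs (m + R)) i) (tens vs R)"
proof (induction i)
  case 0
  show ?case
  proof
    fix l :: "'a list"
    show "tens vs (R + 0) l = ttens R (tens (\<lambda>m. vs (m + R)) 0) (tens vs R) l"
      by (cases "length l = R") (auto simp: ttens_def tens_eq_0)
  qed
next
  case (Suc i)
  have "tens vs (R + Suc i) = vtens (vs (R + i)) (tens vs (R + i))" by simp
  also have "\<dots> = ttens R (vtens (vs (R + i)) (tens (\<lambda>m. vs (m + R)) i)) (tens vs R)"
    using Suc by (simp add: vtens_ttens)
  finally show ?case by (simp add: add.commute)
qed

lemma vtens_smult_vec: "vtens (c *s u) t = (\<lambda>l. c * vtens u t l)"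
  by (auto simp: vtens_def split: list.split)

lemma vtens_smult: "vtens v (\<lambda>l. c * t l) = (\<lambda>l. c * vtens v t l)"
  by (auto simp: vtens_def split: list.split)

lemma vtens_add: "vtens v (\<lambda>l. s l + t l) = (\<lambda>l. vtens v s l + vtens v t l)"
  by (auto simp: vtens_def algebra_simps split: list.split)

lemma vtens_zero [simp]: "vtens v (\<lambda>_. 0) = (\<lambda>_. 0)" "vtens 0 t = (\<lambda>_. 0)"
  by (auto simp: vtens_def split: list.split)

lemma tens_smult_vecs:
  "(\<And>m. m < n \<Longrightarrow> vs m = cs m *s us m) \<Longrightarrow> tens vs n = (\<lambda>l. (\<Prod>m<n. cs m) * tens us n l)"
proof (induction n)
  case (Suc n)
  have "tens vs (Suc n) = vtens (cs n *s us n) (\<lambda>l. (\<Prod>m<n. cs m) * tens us n l)"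
    using Suc by simp
  also have "\<dots> = (\<lambda>l. (\<Prod>m<n. cs m) * (cs n * vtens (us n) (tens us n) l))"
    by (simp only: vtens_smult_vec vtens_smult)
  also have "\<dots> = (\<lambda>l. (\<Prod>m<Suc n. cs m) * tens us (Suc n) l)"
    by (simp add: fun_eq_iff mult_ac)
  finally show ?case .
qed simp

lemma ttens_smult: "ttens R (\<lambda>l. c * s l) t = (\<lambda>l. c * ttens R s t l)"
  and ttens_smult_right: "ttens R s (\<lambda>l. c * t l) = (\<lambda>l. c * ttens R s t l)"
  and ttens_add: "ttens R (\<lambda>l. s l + s' l) t = (\<lambda>l. ttens R s t l + ttens R s' t l)"
  and ttens_zero [simp]: "ttens R (\<lambda>_. 0) t = (\<lambda>_. 0)"
  by (auto simp: ttens_def algebra_simps)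

lemma funpow_funpow_apply: "(f ^^ m) ((f ^^ n) x) = (f ^^ (m + n)) x"
  by (simp add: funpow_add)

lemma fibre_zero: "0 \<in> fibre P x"
  by (simp add: fibre_def)

lemma fibre_smult: "v \<in> fibre P x \<Longrightarrow> c *s v \<in> fibre P x"
  by (simp add: fibre_def vector_scalar_commute)

lemma fibn_zero: "(\<lambda>_. 0) \<in> fibn P \<alpha> j x"
  unfolding fibn_def by (auto intro!: exI[of _ 0] exI[of _ "\<lambda>_. 0"] simp: fibre_zero)

lemma fibn_smult: "t \<in> fibn P \<alpha> j x \<Longrightarrow> (\<lambda>l. c * t l) \<in> fibn P \<alpha> j x"
proof -
  assume "t \<in> fibn P \<alpha> j x"
  then obtain c' vs where "t = (\<lambda>l. c' * tens vs j l)" "\<forall>m<j. vs m \<in> fibre P ((\<alpha> ^^ m) x)"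
    unfolding fibn_def by blast
  then show ?thesis
    unfolding fibn_def by (auto intro!: exI[of _ "c * c'"] exI[of _ vs] simp: mult.assoc)
qed

lemma fibn_eq_0: "t \<in> fibn P \<alpha> j x \<Longrightarrow> length l \<noteq> j \<Longrightarrow> t l = 0"
  unfolding fibn_def by (auto simp: tens_eq_0)

lemma fibn_ttens:
  assumes "s \<in> fibn P \<alpha> i ((\<alpha> ^^ R) x)" "c \<in> fibn P \<alpha> R x"
  shows "ttens R s c \<in> fibn P \<alpha> (R + i) x"
proof -
  obtain c1 vs1 where s: "s = (\<lambda>l. c1 * tens vs1 i l)"
    and vs1: "\<forall>m<i. vs1 m \<in> fibre P ((\<alpha> ^^ m) ((\<alpha> ^^ R) x))"
    using assms(1) unfolding fibn_def by blast
  obtain c2 vs2 where c: "c = (\<lambda>l. c2 * tens vs2 R l)" and vs2: "\<forall>m<R. vs2 m \<in> fibre P ((\<alpha> ^^ m) x)"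
    using assms(2) unfolding fibn_def by blast
  define vs where "vs m = (if m < R then vs2 m else vs1 (m - R))" for m
  have "tens vs (R + i) = ttens R (tens (\<lambda>m. vs (m + R)) i) (tens vs R)"
    by (rule tens_split)
  also have "tens (\<lambda>m. vs (m + R)) i = tens vs1 i"
    by (rule tens_cong) (simp add: vs_def)
  also have "tens vs R = tens vs2 R"
    by (rule tens_cong) (simp add: vs_def)
  finally have "ttens R s c = (\<lambda>l. (c1 * c2) * tens vs (R + i) l)"
    by (simp add: s c ttens_smult ttens_smult_right mult.assoc)
  moreover have "\<forall>m<R + i. vs m \<in> fibre P ((\<alpha> ^^ m) x)"
  proof (intro allI impI)
    fix m
    assume "m < R + i"
    then show "vs m \<in> fibre P ((\<alpha> ^^ m) x)"
      using vs1[rule_format, of "m - R"] vs2 by (auto simp: vs_def funpow_funpow_apply)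
  qed
  ultimately show ?thesis
    unfolding fibn_def by blast
qed

lemma fibn_vtens:
  assumes "t \<in> fibn P \<alpha> j x" "v \<in> fibre P ((\<alpha> ^^ j) x)"
  shows "vtens v t \<in> fibn P \<alpha> (Suc j) x"
proof -
  obtain c vs where t: "t = (\<lambda>l. c * tens vs j l)" and vs: "\<forall>m<j. vs m \<in> fibre P ((\<alpha> ^^ m) x)"
    using assms(1) unfolding fibn_def by blast
  have "tens (vs(j := v)) j = tens vs j"
    by (rule tens_cong) simp
  then have "vtens v t = (\<lambda>l. c * tens (vs(j := v)) (Suc j) l)"
    by (simp add: t vtens_smult)
  moreover have "\<forall>m<Suc j. (vs(j := v)) m \<in> fibre P ((\<alpha> ^^ m) x)"
    using vs assms(2) by (auto simp: less_Suc_eq)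
  ultimately show ?thesis
    unfolding fibn_def by blast
qed

lemma ipD_add_right: "ipD r a (\<lambda>j l. b j l + b' j l) = ipD r a b + ipD r a b'"
  by (simp add: ipD_def distrib_left sum.distrib)

lemma ipD_diff_right: "ipD r a (\<lambda>j l. b j l - b' j l) = ipD r a b - ipD r a b'"
  by (simp add: ipD_def right_diff_distrib sum_subtractf)

lemma ipD_smult_right: "ipD r a (\<lambda>j l. c * b j l) = c * ipD r a b"
  by (simp add: ipD_def sum_distrib_left mult.left_commute)

lemma ipD_smult_left: "ipD r (\<lambda>j l. c * a j l) b = cnj c * ipD r a b"
  by (simp add: ipD_def sum_distrib_left mult.assoc)

lemma ipD_sum_left: "ipD r (\<lambda>j l. \<Sum>m\<in>S. F m j l) b = (\<Sum>m\<in>S. ipD r (F m) b)"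
  unfolding ipD_def cnj_sum sum_distrib_right
  by (subst (2) sum.swap, subst sum.swap) (rule refl)

lemma ipD_sum_right: "ipD r a (\<lambda>j l. \<Sum>m\<in>S. F m j l) = (\<Sum>m\<in>S. ipD r a (F m))"
  unfolding ipD_def sum_distrib_left
  by (subst (2) sum.swap, subst sum.swap) (rule refl)

lemma ipD_self_eq_0:
  fixes a :: "'n::finite dvec"
  assumes "ipD r a a = 0" "j < r" "length l = j"
  shows "a j l = 0"
proof -
  have "(\<Sum>(j, l)\<in>Sigma {..<r} (\<lambda>j. {l. length l = j}). cnj (a j l) * a j l) = 0"
    using assms(1) by (simp add: ipD_def sum.Sigma)
  then have "(\<Sum>jl\<in>Sigma {..<r} (\<lambda>j. {l. length l = j}). cnj (case_prod a jl) * case_prod a jl) = 0"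
    by (simp add: split_def)
  then have "\<forall>jl\<in>Sigma {..<r} (\<lambda>j. {l. length l = j}). case_prod a jl = 0"
    by (simp add: sum_cnj_mult_self_eq_0_iff)
  then show ?thesis
    using assms(2,3) by auto
qed

lemma ipD_self: "ipD r a a = complex_of_real (\<Sum>j<r. \<Sum>l\<in>{l. length l = j}. (cmod (a j l))\<^sup>2)"
  by (simp only: ipD_def of_real_sum cnj_mult_self)

lemma normD_nonneg: "0 \<le> normD r a"
  by (simp add: normD_def ipD_self sum_nonneg)

lemma norm_le_normD:
  fixes a :: "'n::finite dvec"
  assumes "j < r" "length l = j"
  shows "cmod (a j l) \<le> normD r a"
proof -
  have "(cmod (a j l))\<^sup>2 \<le> (\<Sum>l\<in>{l. length l = j}. (cmod (a j l))\<^sup>2)"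
    using assms by (intro member_le_sum) auto
  also have "\<dots> \<le> (\<Sum>j<r. \<Sum>l\<in>{l. length l = j}. (cmod (a j l))\<^sup>2)"
    using assms by (intro member_le_sum) (auto intro: sum_nonneg)
  also have "\<dots> = Re (ipD r a a)"
    by (simp add: ipD_self)
  finally show ?thesis
    unfolding normD_def by (rule real_le_rsqrt)
qed

lemma tendsto_coordinate_of_normD:
  fixes G :: "nat \<Rightarrow> 'n::finite dvec"
  assumes conv: "\<forall>e>0. \<exists>N. \<forall>n\<ge>N. normD r (\<lambda>j l. G n j l - H j l) \<le> e * normD r a"
    and "j < r" "length l = j"
  shows "(\<lambda>n. G n j l) \<longlonglongrightarrow> H j l"
proof (rule LIMSEQ_I)
  fix e :: real
  assume "0 < e"
  define K where "K = normD r a"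
  have K: "0 \<le> K"
    by (simp add: K_def normD_nonneg)
  then have "e / (K + 1) > 0"
    using \<open>0 < e\<close> by simp
  then obtain N where N: "\<forall>n\<ge>N. normD r (\<lambda>j l. G n j l - H j l) \<le> e / (K + 1) * K"
    using conv unfolding K_def by blast
  have "cmod (G n j l - H j l) < e" if "n \<ge> N" for n
  proof -
    have "cmod (G n j l - H j l) \<le> normD r (\<lambda>j l. G n j l - H j l)"
      by (rule norm_le_normD[OF assms(2,3)])
    also have "\<dots> \<le> e / (K + 1) * K"
      using N that by blast
    also have "\<dots> < e"
      using K \<open>0 < e\<close> by (simp add: field_simps)
    finally show ?thesis .
  qed
  then show "\<exists>N. \<forall>n\<ge>N. norm (G n j l - H j l) < e"
    by blast
qed


section \<open>Adjoints on spaces spanned by one tensor per degree\<close>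

definition dlinear_on :: "'n dvec set \<Rightarrow> ('n dvec \<Rightarrow> 'n dvec) \<Rightarrow> bool" where
  "dlinear_on D T \<longleftrightarrow> (\<forall>a\<in>D. \<forall>b\<in>D. T (\<lambda>j l. a j l + b j l) = (\<lambda>j l. T a j l + T b j l)) \<and>
     (\<forall>a\<in>D. \<forall>c. T (\<lambda>j l. c * a j l) = (\<lambda>j l. c * T a j l))"

lemma dlinear_onD:
  assumes "dlinear_on D T" "a \<in> D"
  shows "b \<in> D \<Longrightarrow> T (\<lambda>j l. a j l + b j l) = (\<lambda>j l. T a j l + T b j l)"
    and "T (\<lambda>j l. c * a j l) = (\<lambda>j l. c * T a j l)"
  using assms unfolding dlinear_on_def by blast+

lemma dlinear_on_sum:
  assumes T: "dlinear_on D T" and zero: "(\<lambda>_ _. 0) \<in> D"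
    and add: "\<And>a b. a \<in> D \<Longrightarrow> b \<in> D \<Longrightarrow> (\<lambda>j l. a j l + b j l) \<in> D"
    and "finite S" "\<And>m. m \<in> S \<Longrightarrow> F m \<in> D"
  shows "T (\<lambda>j l. \<Sum>m\<in>S. F m j l) = (\<lambda>j l. \<Sum>m\<in>S. T (F m) j l)"
proof -
  have "(\<lambda>j l. \<Sum>m\<in>S. F m j l) \<in> D \<and> T (\<lambda>j l. \<Sum>m\<in>S. F m j l) = (\<lambda>j l. \<Sum>m\<in>S. T (F m) j l)"
    using assms(4,5)
  proof (induction S rule: finite_induct)
    case empty
    then show ?case
      using zero dlinear_onD(2)[OF T zero, of 0] by simp
  next
    case (insert m S)
    then show ?case
      using add[of "F m" "\<lambda>j l. \<Sum>m\<in>S. F m j l"] dlinear_onD(1)[OF T, of "F m" "\<lambda>j l. \<Sum>m\<in>S. F m j l"]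
      by simp
  qed
  then show ?thesis ..
qed

definition graded_span :: "nat \<Rightarrow> (nat \<Rightarrow> 'n tensor) \<Rightarrow> 'n dvec set" where
  "graded_span r E = {a. (\<forall>j<r. \<exists>c. a j = (\<lambda>l. c * E j l)) \<and> (\<forall>j\<ge>r. a j = (\<lambda>_. 0))}"

lemma graded_span_zero: "(\<lambda>_ _. 0) \<in> graded_span r E"
  unfolding graded_span_def by (auto intro: exI[of _ 0])

lemma graded_span_add:
  assumes "a \<in> graded_span r E" "b \<in> graded_span r E"
  shows "(\<lambda>j l. a j l + b j l) \<in> graded_span r E"
proof -
  have "\<exists>c. (\<lambda>l. a j l + b j l) = (\<lambda>l. c * E j l)" if "j < r" for j
  proof -
    obtain c1 c2 where "a j = (\<lambda>l. c1 * E j l)" "b j = (\<lambda>l. c2 * E j l)"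
      using assms \<open>j < r\<close> unfolding graded_span_def by blast
    then show ?thesis
      by (intro exI[of _ "c1 + c2"]) (auto simp: fun_eq_iff distrib_right)
  qed
  then show ?thesis
    using assms unfolding graded_span_def by auto
qed

lemma graded_span_smult:
  assumes "a \<in> graded_span r E"
  shows "(\<lambda>j l. c * a j l) \<in> graded_span r E"
proof -
  have "\<exists>c'. (\<lambda>l. c * a j l) = (\<lambda>l. c' * E j l)" if "j < r" for j
  proof -
    obtain c1 where "a j = (\<lambda>l. c1 * E j l)"
      using assms \<open>j < r\<close> unfolding graded_span_def by blast
    then show ?thesis
      by (intro exI[of _ "c * c1"]) (auto simp: fun_eq_iff)
  qed
  then show ?thesis
    using assms unfolding graded_span_def by auto
qed

lemma graded_span_sum:
  "finite S \<Longrightarrow> (\<And>m. m \<in> S \<Longrightarrow> F m \<in> graded_span r E) \<Longrightarrow> (\<lambda>j l. \<Sum>m\<in>S. F m j l) \<in> graded_span r E"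
proof (induction S rule: finite_induct)
  case (insert m S)
  then show ?case
    using graded_span_add[of "F m" r E "\<lambda>j l. \<Sum>m\<in>S. F m j l"] by simp
qed (simp add: graded_span_zero)

definition grade_sqnorm :: "(nat \<Rightarrow> 'n tensor) \<Rightarrow> nat \<Rightarrow> complex" where
  "grade_sqnorm E j = (\<Sum>l\<in>{l. length l = j}. cnj (E j l) * E j l)"

definition grade_vec :: "(nat \<Rightarrow> 'n tensor) \<Rightarrow> nat \<Rightarrow> 'n dvec" where
  "grade_vec E j = (\<lambda>i. if i = j then E j else (\<lambda>_. 0))"

definition grade_coeff :: "(nat \<Rightarrow> 'n tensor) \<Rightarrow> nat \<Rightarrow> 'n dvec \<Rightarrow> complex" where
  "grade_coeff E j a = (\<Sum>l\<in>{l. length l = j}. cnj (E j l) * a j l) / grade_sqnorm E j"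

lemma grade_vec_in_graded_span: "j < r \<Longrightarrow> grade_vec E j \<in> graded_span r E"
  unfolding graded_span_def grade_vec_def by (auto intro: exI[of _ 1] exI[of _ 0])

context
  fixes E :: "nat \<Rightarrow> 'n::finite tensor" and r :: nat
  assumes nonzero: "\<And>j. j < r \<Longrightarrow> grade_sqnorm E j \<noteq> 0"
begin

lemma graded_span_component:
  assumes "a \<in> graded_span r E" "j < r"
  shows "a j = (\<lambda>l. grade_coeff E j a * E j l)"
proof -
  obtain c where c: "a j = (\<lambda>l. c * E j l)"
    using assms unfolding graded_span_def by blast
  have "grade_coeff E j a = c * grade_sqnorm E j / grade_sqnorm E j"
    unfolding grade_coeff_def grade_sqnorm_def c by (simp add: sum_distrib_left mult.left_commute)
  then show ?thesis
    using c nonzero[OF assms(2)] by simp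
qed

lemma graded_span_expansion:
  assumes "a \<in> graded_span r E"
  shows "a = (\<lambda>i l. \<Sum>j<r. grade_coeff E j a * grade_vec E j i l)"
proof (intro ext)
  fix i l
  show "a i l = (\<Sum>j<r. grade_coeff E j a * grade_vec E j i l)"
  proof (cases "i < r")
    case True
    have "(\<Sum>j<r. grade_coeff E j a * grade_vec E j i l) = (\<Sum>j<r. if j = i then grade_coeff E j a * E j l else 0)"
      by (rule sum.cong) (auto simp: grade_vec_def)
    then show ?thesis
      using True graded_span_component[OF assms True] by simp
  next
    case False
    then show ?thesis
      using assms by (auto simp: graded_span_def grade_vec_def intro!: sum.neutral[symmetric])
  qed
qed

lemma ipD_grade_vec:
  assumes "c \<in> graded_span r E" "j < r"
  shows "ipD r c (grade_vec E j) = cnj (grade_coeff E j c) * grade_sqnorm E j"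
proof -
  have "ipD r c (grade_vec E j) = (\<Sum>i<r. if i = j then (\<Sum>l\<in>{l. length l = i}. cnj (c i l) * E i l) else 0)"
    unfolding ipD_def grade_vec_def by (rule sum.cong) auto
  also have "\<dots> = (\<Sum>l\<in>{l. length l = j}. cnj (c j l) * E j l)"
    using assms(2) by simp
  also have "\<dots> = cnj (grade_coeff E j c) * grade_sqnorm E j"
    unfolding grade_sqnorm_def graded_span_component[OF assms] by (simp add: sum_distrib_left mult.assoc)
  finally show ?thesis .
qed

lemma graded_span_adjoint_exists:
  assumes maps: "\<And>a. a \<in> graded_span r E \<Longrightarrow> T a \<in> graded_span r E"
    and T: "dlinear_on (graded_span r E) T" and "a \<in> graded_span r E"
  shows "\<exists>b\<in>graded_span r E. \<forall>c\<in>graded_span r E. ipD r (T c) a = ipD r c b"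
proof
  \<comment> \<open>the coefficients of the adjoint image are read off from the values of \<open>T\<close> on the basis\<close>
  define b where "b = (\<lambda>i l. \<Sum>j<r. (ipD r (T (grade_vec E j)) a / grade_sqnorm E j) * grade_vec E j i l)"
  show "b \<in> graded_span r E"
    unfolding b_def by (intro graded_span_sum graded_span_smult grade_vec_in_graded_span) auto
  show "\<forall>c\<in>graded_span r E. ipD r (T c) a = ipD r c b"
  proof
    fix c
    assume c: "c \<in> graded_span r E"
    have "T c = T (\<lambda>i l. \<Sum>j<r. (\<lambda>i l. grade_coeff E j c * grade_vec E j i l) i l)"
      using graded_span_expansion[OF c] by simp
    also have "\<dots> = (\<lambda>i l. \<Sum>j<r. T (\<lambda>i l. grade_coeff E j c * grade_vec E j i l) i l)"
      by (rule dlinear_on_sum[OF T graded_span_zero graded_span_add])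
        (auto intro: graded_span_smult grade_vec_in_graded_span)
    also have "\<dots> = (\<lambda>i l. \<Sum>j<r. grade_coeff E j c * T (grade_vec E j) i l)"
      by (intro ext sum.cong) (auto simp: dlinear_onD(2)[OF T] grade_vec_in_graded_span)
    finally have "ipD r (T c) a = (\<Sum>j<r. cnj (grade_coeff E j c) * ipD r (T (grade_vec E j)) a)"
      by (simp add: ipD_sum_left ipD_smult_left)
    also have "\<dots> = (\<Sum>j<r. (ipD r (T (grade_vec E j)) a / grade_sqnorm E j) * ipD r c (grade_vec E j))"
      using nonzero ipD_grade_vec[OF c] by (intro sum.cong) auto
    also have "\<dots> = ipD r c b"
      unfolding b_def ipD_sum_right ipD_smult_right ..
    finally show "ipD r (T c) a = ipD r c b" .
  qed
qed

end

lemma graded_span_eqI: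
  assumes "\<And>j l. length l \<noteq> j \<Longrightarrow> E j l = 0"
    and "a \<in> graded_span r E" "b \<in> graded_span r E"
    and "\<And>j l. j < r \<Longrightarrow> length l = j \<Longrightarrow> a j l = b j l"
  shows "a = b"
proof (intro ext)
  fix j l
  show "a j l = b j l"
  proof (cases "j < r \<and> length l \<noteq> j")
    case True
    then obtain c1 c2 where "a j = (\<lambda>l. c1 * E j l)" "b j = (\<lambda>l. c2 * E j l)"
      using assms(2,3) unfolding graded_span_def by blast
    then show ?thesis
      using assms(1) True by simp
  next
    case False
    then show ?thesis
      using assms(2-4) unfolding graded_span_def by (cases "j < r") auto
  qed
qed

lemma graded_span_adjoint_unique:
  fixes E :: "nat \<Rightarrow> 'n::finite tensor"
  assumes "\<And>j l. length l \<noteq> j \<Longrightarrow> E j l = 0"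
    and b: "b \<in> graded_span r E" "b' \<in> graded_span r E"
    and "\<And>c. c \<in> graded_span r E \<Longrightarrow> ipD r c b = ipD r c b'"
  shows "b = b'"
proof (rule graded_span_eqI[OF assms(1) b])
  define d where "d = (\<lambda>j l. b j l - b' j l)"
  have "d \<in> graded_span r E"
    unfolding d_def using graded_span_add[OF b(1) graded_span_smult[OF b(2), of "-1"]] by simp
  then have "ipD r d d = 0"
    using assms(4) by (simp add: d_def ipD_diff_right)
  then show "b j l = b' j l" if "j < r" "length l = j" for j l
    using ipD_self_eq_0 that by (fastforce simp: d_def)
qed


lemma Dsp_iff: "a \<in> Dsp P \<alpha> r z \<longleftrightarrow> (\<forall>j<r. a j \<in> fibn P \<alpha> j z) \<and> (\<forall>j\<ge>r. a j = (\<lambda>_. 0))"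
  unfolding Dsp_def by simp

lemma Dsp_eq_0: "a \<in> Dsp P \<alpha> r z \<Longrightarrow> r \<le> j \<or> length l \<noteq> j \<Longrightarrow> a j l = 0"
  unfolding Dsp_iff using fibn_eq_0 by (metis not_le)

definition orbit_tens :: "('a \<Rightarrow> complex^'n::finite^'n) \<Rightarrow> ('a \<Rightarrow> 'a) \<Rightarrow> 'a \<Rightarrow> nat \<Rightarrow> 'n tensor" where
  "orbit_tens P \<alpha> z j = tens (\<lambda>m. fibre_gen P ((\<alpha> ^^ m) z)) j"

locale bundle_orbit =
  fixes X :: "'a::metric_space set" and P :: "'a \<Rightarrow> complex^'n::finite^'n"
    and \<alpha> :: "'a \<Rightarrow> 'a" and Y :: "'a set"
  assumes line_bundle: "line_bundle_proj X P" and maps_X: "\<alpha> ` X \<subseteq> X"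
    and Y_subset: "Y \<subseteq> X" and closed_X: "closed X"
begin

lemma funpow_in_X: "z \<in> X \<Longrightarrow> (\<alpha> ^^ m) z \<in> X"
  by (induction m) (use maps_X in auto)

lemma closure_Yk_subset: "closure (Yk \<alpha> Y k) \<subseteq> X"
  using Y_subset closed_X by (intro closure_minimal) (auto simp: Yk_def)

context
  fixes z
  assumes z: "z \<in> X"
begin

lemma fibn_iff_orbit_tens: "t \<in> fibn P \<alpha> j z \<longleftrightarrow> (\<exists>c. t = (\<lambda>l. c * orbit_tens P \<alpha> z j l))"
proof
  assume "t \<in> fibn P \<alpha> j z"
  then obtain c vs where t: "t = (\<lambda>l. c * tens vs j l)" and vs: "\<forall>m<j. vs m \<in> fibre P ((\<alpha> ^^ m) z)"
    unfolding fibn_def by blast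
  have "\<forall>m. \<exists>cm. m < j \<longrightarrow> vs m = cm *s fibre_gen P ((\<alpha> ^^ m) z)"
    using vs fibre_gen(3)[OF line_bundle funpow_in_X[OF z]] by blast
  then obtain cs where "\<And>m. m < j \<Longrightarrow> vs m = cs m *s fibre_gen P ((\<alpha> ^^ m) z)"
    by metis
  then have "tens vs j = (\<lambda>l. (\<Prod>m<j. cs m) * orbit_tens P \<alpha> z j l)"
    unfolding orbit_tens_def by (rule tens_smult_vecs)
  then show "\<exists>c. t = (\<lambda>l. c * orbit_tens P \<alpha> z j l)"
    unfolding t by (intro exI[of _ "c * (\<Prod>m<j. cs m)"]) (simp add: mult.assoc)
next
  assume "\<exists>c. t = (\<lambda>l. c * orbit_tens P \<alpha> z j l)"
  then show "t \<in> fibn P \<alpha> j z"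
    using fibre_gen(2)[OF line_bundle funpow_in_X[OF z]] unfolding fibn_def orbit_tens_def by blast
qed

lemma Dsp_eq_graded_span: "Dsp P \<alpha> r z = graded_span r (orbit_tens P \<alpha> z)"
  unfolding Dsp_def graded_span_def using fibn_iff_orbit_tens by auto

lemma grade_sqnorm_orbit_tens: "grade_sqnorm (orbit_tens P \<alpha> z) j \<noteq> 0"
proof -
  obtain l where "length l = j" "orbit_tens P \<alpha> z j l \<noteq> 0"
    using tens_nonzero[of j "\<lambda>m. fibre_gen P ((\<alpha> ^^ m) z)"] fibre_gen(1)[OF line_bundle funpow_in_X[OF z]]
    unfolding orbit_tens_def by blast
  then show ?thesis
    unfolding grade_sqnorm_def by (subst sum_cnj_mult_self_eq_0_iff) auto
qed

lemma Dsp_zero: "(\<lambda>_ _. 0) \<in> Dsp P \<alpha> r z"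
  and Dsp_add: "a \<in> Dsp P \<alpha> r z \<Longrightarrow> b \<in> Dsp P \<alpha> r z \<Longrightarrow> (\<lambda>j l. a j l + b j l) \<in> Dsp P \<alpha> r z"
  and Dsp_smult: "a \<in> Dsp P \<alpha> r z \<Longrightarrow> (\<lambda>j l. c * a j l) \<in> Dsp P \<alpha> r z"
  unfolding Dsp_eq_graded_span by (rule graded_span_zero graded_span_add graded_span_smult; assumption)+

lemma dlinear_on_Dsp_sum:
  "dlinear_on (Dsp P \<alpha> r z) T \<Longrightarrow> finite S \<Longrightarrow> (\<And>m. m \<in> S \<Longrightarrow> F m \<in> Dsp P \<alpha> r z) \<Longrightarrow>
    T (\<lambda>j l. \<Sum>m\<in>S. F m j l) = (\<lambda>j l. \<Sum>m\<in>S. T (F m) j l)"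
  by (rule dlinear_on_sum[OF _ Dsp_zero Dsp_add])

context
  fixes r T
  assumes maps: "\<forall>a\<in>Dsp P \<alpha> r z. T a \<in> Dsp P \<alpha> r z" and T: "dlinear_on (Dsp P \<alpha> r z) T"
begin

lemma adjD_Dsp_ex1:
  assumes "a \<in> Dsp P \<alpha> r z"
  shows "\<exists>!b. b \<in> Dsp P \<alpha> r z \<and> (\<forall>c\<in>Dsp P \<alpha> r z. ipD r (T c) a = ipD r c b)"
proof (rule ex_ex1I)
  show "\<exists>b. b \<in> Dsp P \<alpha> r z \<and> (\<forall>c\<in>Dsp P \<alpha> r z. ipD r (T c) a = ipD r c b)"
    using graded_span_adjoint_exists[OF grade_sqnorm_orbit_tens] maps T assms
    unfolding Dsp_eq_graded_span by blast
  show "b = b'" if "b \<in> Dsp P \<alpha> r z \<and> (\<forall>c\<in>Dsp P \<alpha> r z. ipD r (T c) a = ipD r c b)"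
    and "b' \<in> Dsp P \<alpha> r z \<and> (\<forall>c\<in>Dsp P \<alpha> r z. ipD r (T c) a = ipD r c b')" for b b'
    using that unfolding Dsp_eq_graded_span
    by (intro graded_span_adjoint_unique[where E = "orbit_tens P \<alpha> z"]) (auto simp: orbit_tens_def tens_eq_0)
qed

lemma adjD_Dsp:
  assumes "a \<in> Dsp P \<alpha> r z"
  shows "adjD P \<alpha> r z T a \<in> Dsp P \<alpha> r z" "c \<in> Dsp P \<alpha> r z \<Longrightarrow> ipD r (T c) a = ipD r c (adjD P \<alpha> r z T a)"
  using theI'[OF adjD_Dsp_ex1[OF assms]] unfolding adjD_def by blast+

lemma adjD_Dsp_eqI:
  assumes "a \<in> Dsp P \<alpha> r z" "b \<in> Dsp P \<alpha> r z" "\<And>c. c \<in> Dsp P \<alpha> r z \<Longrightarrow> ipD r (T c) a = ipD r c b"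
  shows "adjD P \<alpha> r z T a = b"
  unfolding adjD_def using assms by (intro the1_equality[OF adjD_Dsp_ex1]) auto

end

end

end


lemma inj_comp_in_Dsp:
  assumes "b \<in> Dsp P \<alpha> r' ((\<alpha> ^^ R) x)" "c \<in> fibn P \<alpha> R x" "R + r' \<le> r"
  shows "inj_comp R r' b c \<in> Dsp P \<alpha> r x"
  unfolding Dsp_iff
proof (intro conjI allI impI)
  fix j
  show "inj_comp R r' b c j \<in> fibn P \<alpha> j x"
  proof (cases "R \<le> j \<and> j < R + r'")
    case True
    then have "b (j - R) \<in> fibn P \<alpha> (j - R) ((\<alpha> ^^ R) x)"
      using assms(1) unfolding Dsp_iff by auto
    then have "ttens R (b (j - R)) c \<in> fibn P \<alpha> (R + (j - R)) x"
      using assms(2) by (rule fibn_ttens)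
    then show ?thesis
      using True by (simp add: inj_comp_def)
  qed (auto simp: inj_comp_def fibn_zero)
next
  fix j
  assume "r \<le> j"
  then show "inj_comp R r' b c j = (\<lambda>_. 0)"
    using assms(3) by (simp add: inj_comp_def)
qed

lemma inj_comp_add: "inj_comp R r (\<lambda>j l. b j l + b' j l) c = (\<lambda>j l. inj_comp R r b c j l + inj_comp R r b' c j l)"
  and inj_comp_smult: "inj_comp R r (\<lambda>j l. a * b j l) c = (\<lambda>j l. a * inj_comp R r b c j l)"
  by (auto simp: inj_comp_def ttens_add ttens_smult fun_eq_iff)

lemma inj_comp_apply:
  "inj_comp R r b c j l = (if R \<le> j \<and> j < R + r \<and> R \<le> length l
     then b (j - R) (take (length l - R) l) * c (drop (length l - R) l) else 0)"
  by (simp add: inj_comp_def ttens_def)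

lemma sum_lists_take_drop:
  fixes f g :: "'n::finite list \<Rightarrow> complex"
  shows "(\<Sum>l\<in>{l. length l = i + R}. f (take i l) * g (drop i l))
    = (\<Sum>l\<in>{l. length l = i}. f l) * (\<Sum>l\<in>{l. length l = R}. g l)"
proof -
  have "(\<Sum>l\<in>{l. length l = i}. f l) * (\<Sum>l\<in>{l. length l = R}. g l)
      = (\<Sum>(l1, l2)\<in>{l. length l = i} \<times> {l. length l = R}. f l1 * g l2)"
    by (simp add: sum_product sum.cartesian_product)
  also have "\<dots> = (\<Sum>l\<in>{l. length l = i + R}. f (take i l) * g (drop i l))"
    by (rule sum.reindex_bij_witness[of _ "\<lambda>l. (take i l, drop i l)" "\<lambda>(l1, l2). l1 @ l2"]) auto
  finally show ?thesis ..
qed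

definition ipTens :: "nat \<Rightarrow> 'n::finite tensor \<Rightarrow> 'n tensor \<Rightarrow> complex" where
  "ipTens R c c' = (\<Sum>l\<in>{l. length l = R}. cnj (c l) * c' l)"

lemma ipD_inj_comp:
  fixes b b' :: "'n::finite dvec"
  assumes "R + r' \<le> r"
  shows "ipD r (inj_comp R r' b c) (inj_comp R r' b' c') = ipD r' b b' * ipTens R c c'"
proof -
  let ?g = "\<lambda>j. \<Sum>l\<in>{l. length l = j}. cnj (inj_comp R r' b c j l) * inj_comp R r' b' c' j l"
  have "ipD r (inj_comp R r' b c) (inj_comp R r' b' c') = (\<Sum>j\<in>{R..<R + r'}. ?g j)"
    unfolding ipD_def using assms by (intro sum.mono_neutral_right) (auto simp: inj_comp_def)
  also have "\<dots> = (\<Sum>i\<in>{0..<r'}. ?g (i + R))"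
    using sum.shift_bounds_nat_ivl[of ?g 0 R r'] by (simp add: add.commute)
  also have "\<dots> = (\<Sum>i\<in>{0..<r'}. (\<Sum>l\<in>{l. length l = i}. cnj (b i l) * b' i l) * ipTens R c c')"
  proof (rule sum.cong[OF refl])
    fix i
    assume "i \<in> {0..<r'}"
    then have "?g (i + R) = (\<Sum>l\<in>{l. length l = i + R}.
        (cnj (b i (take i l)) * b' i (take i l)) * (cnj (c (drop i l)) * c' (drop i l)))"
      by (intro sum.cong) (auto simp: inj_comp_def ttens_def)
    also have "\<dots> = (\<Sum>l\<in>{l. length l = i}. cnj (b i l) * b' i l) * ipTens R c c'"
      unfolding ipTens_def by (rule sum_lists_take_drop)
    finally show "?g (i + R) = \<dots>" .
  qed
  also have "\<dots> = ipD r' b b' * ipTens R c c'"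
    by (simp add: ipD_def sum_distrib_right atLeast0LessThan)
  finally show ?thesis .
qed

lemma ipD_inj_comp_disjoint:
  assumes "R + r' \<le> R' \<or> R' + r'' \<le> R"
  shows "ipD r (inj_comp R r' b c) (inj_comp R' r'' b' c') = 0"
  unfolding ipD_def using assms by (intro sum.neutral ballI) (auto simp: inj_comp_def)

definition dvec_single :: "nat \<Rightarrow> 'n tensor \<Rightarrow> 'n dvec" where
  "dvec_single j v = (\<lambda>i. if i = j then v else (\<lambda>_. 0))"

lemma dvec_single_in_Dsp: "j < r \<Longrightarrow> v \<in> fibn P \<alpha> j z \<Longrightarrow> dvec_single j v \<in> Dsp P \<alpha> r z"
  unfolding Dsp_iff dvec_single_def by (auto simp: fibn_zero)

lemma Dsp_sum_singles:
  assumes "a \<in> Dsp P \<alpha> r z"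
  shows "a = (\<lambda>i l. \<Sum>j<r. dvec_single j (a j) i l)"
proof (intro ext)
  fix i l
  have "(\<Sum>j<r. dvec_single j (a j) i l) = (\<Sum>j<r. if j = i then a i l else 0)"
    by (rule sum.cong) (auto simp: dvec_single_def)
  then show "a i l = (\<Sum>j<r. dvec_single j (a j) i l)"
    using Dsp_eq_0[OF assms, of i l] by auto
qed

lemma dvec_single_eq_inj_comp:
  assumes v: "v \<in> fibn P \<alpha> j x" and j: "R \<le> j" "j < R + r"
  obtains b c where "b \<in> Dsp P \<alpha> r ((\<alpha> ^^ R) x)" "c \<in> fibn P \<alpha> R x"
    "dvec_single j v = inj_comp R r b c"
proof -
  obtain c0 vs where v_eq: "v = (\<lambda>l. c0 * tens vs j l)" and vs: "\<forall>m<j. vs m \<in> fibre P ((\<alpha> ^^ m) x)"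
    using v unfolding fibn_def by blast
  define i where "i = j - R"
  have ji: "j = R + i" "i < r"
    using j unfolding i_def by auto
  define w where "w = (\<lambda>l. c0 * tens (\<lambda>m. vs (m + R)) i l)"
  have "w \<in> fibn P \<alpha> i ((\<alpha> ^^ R) x)"
    using vs ji unfolding fibn_def w_def
    by (intro CollectI exI[of _ c0] exI[of _ "\<lambda>m. vs (m + R)"]) (auto simp: funpow_funpow_apply)
  then have "dvec_single i w \<in> Dsp P \<alpha> r ((\<alpha> ^^ R) x)"
    using ji by (rule_tac dvec_single_in_Dsp)
  moreover have "tens vs R \<in> fibn P \<alpha> R x"
    using vs j unfolding fibn_def by (auto intro!: exI[of _ 1])
  moreover have "dvec_single j v = inj_comp R r (dvec_single i w) (tens vs R)"
  proof (intro ext)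
    fix i' l
    have "ttens R w (tens vs R) = v"
      unfolding v_eq w_def ji(1) tens_split ttens_smult ..
    then show "dvec_single j v i' l = inj_comp R r (dvec_single i w) (tens vs R) i' l"
      using ji unfolding inj_comp_def dvec_single_def by auto
  qed
  ultimately show ?thesis
    using that by blast
qed

context bundle_orbit
begin

lemma ipD_eq_on_Dsp_by_singles:
  assumes "z \<in> X" and T: "dlinear_on (Dsp P \<alpha> r z) T"
    and singles: "\<And>j v. j < r \<Longrightarrow> v \<in> fibn P \<alpha> j z \<Longrightarrow> ipD r (T (dvec_single j v)) a = ipD r (dvec_single j v) b"
    and c: "c \<in> Dsp P \<alpha> r z"
  shows "ipD r (T c) a = ipD r c b"
proof -
  have c_j: "c j \<in> fibn P \<alpha> j z" if "j < r" for j
    using c that unfolding Dsp_iff by blast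
  have "T c = (\<lambda>i l. \<Sum>j<r. T (dvec_single j (c j)) i l)"
    by (subst Dsp_sum_singles[OF c], rule dlinear_on_Dsp_sum[OF \<open>z \<in> X\<close> T])
      (auto intro: dvec_single_in_Dsp c_j)
  then have "ipD r (T c) a = (\<Sum>j<r. ipD r (T (dvec_single j (c j))) a)"
    by (simp add: ipD_sum_left)
  also have "\<dots> = (\<Sum>j<r. ipD r (dvec_single j (c j)) b)"
    using singles c_j by simp
  also have "\<dots> = ipD r c b"
    by (subst (2) Dsp_sum_singles[OF c]) (simp add: ipD_sum_left)
  finally show ?thesis .
qed

end


section \<open>Boundary decompositions\<close>

definition block_start :: "('a \<Rightarrow> 'a) \<Rightarrow> 'a set \<Rightarrow> nat list \<Rightarrow> nat \<Rightarrow> nat" where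
  "block_start \<alpha> Y ts s = sum_list (map (rr \<alpha> Y) (take s ts))"

definition boundary_decomp :: "('a \<Rightarrow> 'a) \<Rightarrow> 'a set \<Rightarrow> nat \<Rightarrow> 'a \<Rightarrow> nat list \<Rightarrow> bool" where
  "boundary_decomp \<alpha> Y k x ts \<longleftrightarrow> (\<forall>t\<in>set ts. 1 \<le> t \<and> t < k) \<and> sum_list (map (rr \<alpha> Y) ts) = rr \<alpha> Y k \<and>
     (\<forall>s<length ts. (\<alpha> ^^ block_start \<alpha> Y ts s) x \<in> Yk \<alpha> Y (ts ! s))"

lemma bdp_iff_blocks:
  "bdp P \<alpha> Y \<sigma> \<longleftrightarrow> (\<forall>k x ts s b c. k \<in> {1..KK \<alpha> Y} \<longrightarrow> x \<in> closure (Yk \<alpha> Y k) - Yk \<alpha> Y k \<longrightarrow>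
     boundary_decomp \<alpha> Y k x ts \<longrightarrow> s < length ts \<longrightarrow>
     b \<in> Dsp P \<alpha> (rr \<alpha> Y (ts ! s)) ((\<alpha> ^^ block_start \<alpha> Y ts s) x) \<longrightarrow>
     c \<in> fibn P \<alpha> (block_start \<alpha> Y ts s) x \<longrightarrow>
     \<sigma> k x (inj_comp (block_start \<alpha> Y ts s) (rr \<alpha> Y (ts ! s)) b c)
       = inj_comp (block_start \<alpha> Y ts s) (rr \<alpha> Y (ts ! s)) (\<sigma> (ts ! s) ((\<alpha> ^^ block_start \<alpha> Y ts s) x) b) c)"
  unfolding bdp_def boundary_decomp_def block_start_def by blast

lemma block_start_Suc: "s < length ts \<Longrightarrow> block_start \<alpha> Y ts (Suc s) = block_start \<alpha> Y ts s + rr \<alpha> Y (ts ! s)"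
  unfolding block_start_def by (simp add: take_Suc_conv_app_nth)

lemma block_start_mono: "s \<le> s' \<Longrightarrow> block_start \<alpha> Y ts s \<le> block_start \<alpha> Y ts s'"
  unfolding block_start_def by (metis le_add_diff_inverse map_append sum_list_append le_add1 take_add)

context
  fixes \<alpha> :: "'a::topological_space \<Rightarrow> 'a" and Y k x ts
  assumes dc: "boundary_decomp \<alpha> Y k x ts"
begin

lemma block_start_length: "block_start \<alpha> Y ts (length ts) = rr \<alpha> Y k"
  using dc unfolding boundary_decomp_def block_start_def by simp

lemma block_end_le: "s < length ts \<Longrightarrow> block_start \<alpha> Y ts s + rr \<alpha> Y (ts ! s) \<le> rr \<alpha> Y k"
  by (metis Suc_leI block_start_Suc block_start_length block_start_mono)

lemma block_end_last: "Suc s = length ts \<Longrightarrow> block_start \<alpha> Y ts s + rr \<alpha> Y (ts ! s) = rr \<alpha> Y k"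
  by (metis block_start_Suc block_start_length lessI)

lemma block_end_in_Y: "Suc s < length ts \<Longrightarrow> (\<alpha> ^^ (block_start \<alpha> Y ts s + rr \<alpha> Y (ts ! s))) x \<in> Y"
  using dc block_start_Suc[of s ts \<alpha> Y] unfolding boundary_decomp_def Yk_def by auto

lemma block_index: "k \<in> {1..KK \<alpha> Y} \<Longrightarrow> s < length ts \<Longrightarrow> ts ! s \<in> {1..KK \<alpha> Y}"
  using dc nth_mem[of s ts] unfolding boundary_decomp_def by fastforce

lemma block_point_in_closure: "s < length ts \<Longrightarrow> (\<alpha> ^^ block_start \<alpha> Y ts s) x \<in> closure (Yk \<alpha> Y (ts ! s))"
  using dc closure_subset unfolding boundary_decomp_def by blast

lemma blocks_cover:
  assumes "j < rr \<alpha> Y k"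
  obtains s where "s < length ts" "block_start \<alpha> Y ts s \<le> j" "j < block_start \<alpha> Y ts s + rr \<alpha> Y (ts ! s)"
proof -
  have "\<exists>s<n. block_start \<alpha> Y ts s \<le> j \<and> j < block_start \<alpha> Y ts s + rr \<alpha> Y (ts ! s)"
    if "n \<le> length ts" "j < block_start \<alpha> Y ts n" for n
    using that
  proof (induction n)
    case 0
    then show ?case by (simp add: block_start_def)
  next
    case (Suc n)
    then show ?case
      using block_start_Suc[of n ts \<alpha> Y] by (cases "j < block_start \<alpha> Y ts n") (auto intro: less_SucI)
  qed
  from this[OF order_refl] have "\<exists>s<length ts. block_start \<alpha> Y ts s \<le> j \<and> j < block_start \<alpha> Y ts s + rr \<alpha> Y (ts ! s)"
    using assms block_start_length by simp
  then show ?thesis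
    using that by blast
qed

lemma blocks_disjoint:
  assumes "s < length ts" "s' < length ts" "s \<noteq> s'"
  shows "block_start \<alpha> Y ts s + rr \<alpha> Y (ts ! s) \<le> block_start \<alpha> Y ts s'
    \<or> block_start \<alpha> Y ts s' + rr \<alpha> Y (ts ! s') \<le> block_start \<alpha> Y ts s"
  using assms block_start_mono[of "Suc s" s' \<alpha> Y ts] block_start_mono[of "Suc s'" s \<alpha> Y ts]
    block_start_Suc[of s ts \<alpha> Y] block_start_Suc[of s' ts \<alpha> Y]
  by (cases "s < s'") auto

end


section \<open>Generators, algebraic operations and limits\<close>

definition fibrewise_linear :: "('a::topological_space \<Rightarrow> complex^'n::finite^'n) \<Rightarrow> ('a \<Rightarrow> 'a) \<Rightarrow> 'a set
    \<Rightarrow> ('a, 'n) fam \<Rightarrow> bool" where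
  "fibrewise_linear P \<alpha> Y \<sigma> \<longleftrightarrow> (\<forall>k\<in>{1..KK \<alpha> Y}. \<forall>x\<in>closure (Yk \<alpha> Y k).
     (\<forall>a\<in>Dsp P \<alpha> (rr \<alpha> Y k) x. \<sigma> k x a \<in> Dsp P \<alpha> (rr \<alpha> Y k) x) \<and> dlinear_on (Dsp P \<alpha> (rr \<alpha> Y k) x) (\<sigma> k x))"

lemma fibrewise_linearD:
  assumes "fibrewise_linear P \<alpha> Y \<sigma>" "k \<in> {1..KK \<alpha> Y}" "x \<in> closure (Yk \<alpha> Y k)"
  shows "a \<in> Dsp P \<alpha> (rr \<alpha> Y k) x \<Longrightarrow> \<sigma> k x a \<in> Dsp P \<alpha> (rr \<alpha> Y k) x"
    and "dlinear_on (Dsp P \<alpha> (rr \<alpha> Y k) x) (\<sigma> k x)"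
  using assms unfolding fibrewise_linear_def by blast+

lemma fibrewise_linearI:
  "(\<And>k x. k \<in> {1..KK \<alpha> Y} \<Longrightarrow> x \<in> closure (Yk \<alpha> Y k) \<Longrightarrow>
     (\<forall>a\<in>Dsp P \<alpha> (rr \<alpha> Y k) x. \<sigma> k x a \<in> Dsp P \<alpha> (rr \<alpha> Y k) x) \<and> dlinear_on (Dsp P \<alpha> (rr \<alpha> Y k) x) (\<sigma> k x))
   \<Longrightarrow> fibrewise_linear P \<alpha> Y \<sigma>"
  unfolding fibrewise_linear_def by blast

lemma fibrewise_linear_piC: "fibrewise_linear P \<alpha> Y (piC \<alpha> Y f)"
proof (rule fibrewise_linearI, intro conjI ballI)
  fix k x a
  assume "a \<in> Dsp P \<alpha> (rr \<alpha> Y k) x"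
  then show "piC \<alpha> Y f k x a \<in> Dsp P \<alpha> (rr \<alpha> Y k) x"
    unfolding Dsp_iff piC_def by (auto intro: fibn_smult)
next
  fix k x
  show "dlinear_on (Dsp P \<alpha> (rr \<alpha> Y k) x) (piC \<alpha> Y f k x)"
    unfolding dlinear_on_def piC_def by (auto simp: fun_eq_iff algebra_simps)
qed

lemma fibrewise_linear_comp:
  assumes \<sigma>: "fibrewise_linear P \<alpha> Y \<sigma>" and \<tau>: "fibrewise_linear P \<alpha> Y \<tau>"
  shows "fibrewise_linear P \<alpha> Y (\<lambda>k x. \<sigma> k x \<circ> \<tau> k x)"
proof (rule fibrewise_linearI)
  fix k x
  assume "k \<in> {1..KK \<alpha> Y}" "x \<in> closure (Yk \<alpha> Y k)"
  note \<sigma>x = fibrewise_linearD[OF \<sigma> this] and \<tau>x = fibrewise_linearD[OF \<tau> this]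
  show "(\<forall>a\<in>Dsp P \<alpha> (rr \<alpha> Y k) x. (\<sigma> k x \<circ> \<tau> k x) a \<in> Dsp P \<alpha> (rr \<alpha> Y k) x) \<and>
      dlinear_on (Dsp P \<alpha> (rr \<alpha> Y k) x) (\<sigma> k x \<circ> \<tau> k x)"
    using \<sigma>x(1) \<tau>x(1) dlinear_onD[OF \<tau>x(2)] dlinear_onD[OF \<sigma>x(2)] by (simp add: dlinear_on_def)
qed

lemma bdp_piC: "bdp P \<alpha> Y (piC \<alpha> Y f)"
  unfolding bdp_iff_blocks
proof (intro allI impI ext)
  fix k x ts s b c j l
  assume "boundary_decomp \<alpha> Y k x ts" "s < length ts"
  then have "block_start \<alpha> Y ts s + rr \<alpha> Y (ts ! s) \<le> rr \<alpha> Y k"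
    by (rule block_end_le)
  then show "piC \<alpha> Y f k x (inj_comp (block_start \<alpha> Y ts s) (rr \<alpha> Y (ts ! s)) b c) j l =
      inj_comp (block_start \<alpha> Y ts s) (rr \<alpha> Y (ts ! s)) (piC \<alpha> Y f (ts ! s) ((\<alpha> ^^ block_start \<alpha> Y ts s) x) b) c j l"
    by (auto simp: piC_def inj_comp_def ttens_smult funpow_funpow_apply)
qed

lemma EY_eq_0: "\<xi> \<in> EY X P \<alpha> Y \<Longrightarrow> \<alpha> z \<in> Y \<Longrightarrow> \<xi> z = 0"
  unfolding EY_def by auto

lemma EY_in_fibre: "\<xi> \<in> EY X P \<alpha> Y \<Longrightarrow> z \<in> X \<Longrightarrow> \<xi> z \<in> fibre P z"
  unfolding EY_def sections_def by (auto intro: fibre_smult)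

lemma EY_eq_0_at_block_end:
  assumes \<xi>: "\<xi> \<in> EY X P \<alpha> Y" and dc: "boundary_decomp \<alpha> Y k x ts" and s: "s < length ts"
    and j: "j = block_start \<alpha> Y ts s + rr \<alpha> Y (ts ! s)" "0 < j" "j < rr \<alpha> Y k"
  shows "\<xi> ((\<alpha> ^^ (j - 1)) x) = 0"
proof -
  have "Suc s < length ts"
  proof (rule ccontr)
    assume "\<not> Suc s < length ts"
    then have "Suc s = length ts"
      using s by simp
    then show False
      using j block_end_last[OF dc] by simp
  qed
  then have "(\<alpha> ^^ j) x \<in> Y"
    using j(1) block_end_in_Y[OF dc] by simp
  moreover obtain m where "j = Suc m"
    using j(2) not0_implies_Suc by blast
  ultimately show ?thesis
    using EY_eq_0[OF \<xi>] by simp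
qed

lemma bdp_piE:
  fixes \<xi> :: "'a::metric_space \<Rightarrow> complex^'n::finite"
  assumes \<xi>: "\<xi> \<in> EY X P \<alpha> Y"
  shows "bdp P \<alpha> Y (piE \<alpha> Y \<xi>)"
  unfolding bdp_iff_blocks
proof (intro allI impI ext)
  fix k x ts s and b :: "'n dvec" and c :: "'n tensor" and j l
  assume dc: "boundary_decomp \<alpha> Y k x ts" and s: "s < length ts"
  define R where "R = block_start \<alpha> Y ts s"
  define r' where "r' = rr \<alpha> Y (ts ! s)"
  define r where "r = rr \<alpha> Y k"
  have le: "R + r' \<le> r"
    unfolding R_def r'_def r_def using dc s by (rule block_end_le)
  have pk: "piE \<alpha> Y \<xi> k x a j = (if 0 < j \<and> j < r then vtens (\<xi> ((\<alpha> ^^ (j - 1)) x)) (a (j - 1)) else (\<lambda>_. 0))"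
    for a j
    unfolding piE_def r_def by simp
  have pt: "piE \<alpha> Y \<xi> (ts ! s) y a j = (if 0 < j \<and> j < r' then vtens (\<xi> ((\<alpha> ^^ (j - 1)) y)) (a (j - 1)) else (\<lambda>_. 0))"
    for a j y
    unfolding piE_def r'_def by simp
  have ij: "inj_comp R r' a c j = (if R \<le> j \<and> j < R + r' then ttens R (a (j - R)) c else (\<lambda>_. 0))" for a j
    unfolding inj_comp_def by simp
  consider "j = 0 \<or> r \<le> j" | "0 < j \<and> j < r \<and> j \<le> R" | "R < j \<and> j < R + r'"
    | "j = R + r' \<and> 0 < r' \<and> j < r" | "R + r' < j \<and> j < r"
    using le by linarith
  then show "piE \<alpha> Y \<xi> k x (inj_comp R r' b c) j l = inj_comp R r' (piE \<alpha> Y \<xi> (ts ! s) ((\<alpha> ^^ R) x) b) c j l"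
  proof cases
    case 3
    then have "j - Suc R + R = j - Suc 0" "R \<le> j - 1" "j - 1 < R + r'" "j - R < r'" "0 < j - R"
      by auto
    then show ?thesis
      using 3 le by (simp add: pk pt ij vtens_ttens funpow_funpow_apply Suc_diff_Suc)
  next
    case 4
    then have "\<xi> ((\<alpha> ^^ (j - 1)) x) = 0"
      using EY_eq_0_at_block_end[OF \<xi> dc s] unfolding R_def r'_def r_def by simp
    then show ?thesis
      using 4 by (simp add: pk ij)
  qed (use le in \<open>auto simp: pk pt ij\<close>)
qed

lemma bdp_add:
  "bdp P \<alpha> Y \<sigma> \<Longrightarrow> bdp P \<alpha> Y \<tau> \<Longrightarrow> bdp P \<alpha> Y (\<lambda>k x a j l. \<sigma> k x a j l + \<tau> k x a j l)"
  unfolding bdp_iff_blocks by (simp add: inj_comp_add)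

lemma bdp_smult: "bdp P \<alpha> Y \<sigma> \<Longrightarrow> bdp P \<alpha> Y (\<lambda>k x a j l. c * \<sigma> k x a j l)"
  unfolding bdp_iff_blocks by (simp add: inj_comp_smult)

lemma bdp_comp:
  assumes \<sigma>: "bdp P \<alpha> Y \<sigma>" and \<tau>: "bdp P \<alpha> Y \<tau>" "fibrewise_linear P \<alpha> Y \<tau>"
  shows "bdp P \<alpha> Y (\<lambda>k x. \<sigma> k x \<circ> \<tau> k x)"
  unfolding bdp_iff_blocks
proof (intro allI impI)
  fix k x ts s b c
  let ?R = "block_start \<alpha> Y ts s" and ?r = "rr \<alpha> Y (ts ! s)" and ?y = "(\<alpha> ^^ block_start \<alpha> Y ts s) x"
  assume k: "k \<in> {1..KK \<alpha> Y}" and x: "x \<in> closure (Yk \<alpha> Y k) - Yk \<alpha> Y k"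
    and dc: "boundary_decomp \<alpha> Y k x ts" and s: "s < length ts"
    and b: "b \<in> Dsp P \<alpha> ?r ?y" and c: "c \<in> fibn P \<alpha> ?R x"
  have "\<tau> (ts ! s) ?y b \<in> Dsp P \<alpha> ?r ?y"
    using fibrewise_linearD(1)[OF \<tau>(2) block_index[OF dc k s] block_point_in_closure[OF dc s] b] .
  then show "(\<sigma> k x \<circ> \<tau> k x) (inj_comp ?R ?r b c) = inj_comp ?R ?r ((\<sigma> (ts ! s) ?y \<circ> \<tau> (ts ! s) ?y) b) c"
    using \<sigma> \<tau>(1) k x dc s b c unfolding bdp_iff_blocks by simp
qed

lemma ipD_single_block_adjoint:
  assumes \<sigma>: "bdp P \<alpha> Y \<sigma>" and k: "k \<in> {1..KK \<alpha> Y}" and x: "x \<in> closure (Yk \<alpha> Y k) - Yk \<alpha> Y k"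
    and dc: "boundary_decomp \<alpha> Y k x ts" and s: "s < length ts"
    and adjoint: "\<And>b'. b' \<in> Dsp P \<alpha> (rr \<alpha> Y (ts ! s)) ((\<alpha> ^^ block_start \<alpha> Y ts s) x) \<Longrightarrow>
      ipD (rr \<alpha> Y (ts ! s)) (\<sigma> (ts ! s) ((\<alpha> ^^ block_start \<alpha> Y ts s) x) b') b = ipD (rr \<alpha> Y (ts ! s)) b' B"
    and j: "j < rr \<alpha> Y k" and v: "v \<in> fibn P \<alpha> j x"
  shows "ipD (rr \<alpha> Y k) (\<sigma> k x (dvec_single j v)) (inj_comp (block_start \<alpha> Y ts s) (rr \<alpha> Y (ts ! s)) b c)
    = ipD (rr \<alpha> Y k) (dvec_single j v) (inj_comp (block_start \<alpha> Y ts s) (rr \<alpha> Y (ts ! s)) B c)"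
proof -
  let ?R = "block_start \<alpha> Y ts" and ?r = "\<lambda>s. rr \<alpha> Y (ts ! s)" and ?y = "\<lambda>s. (\<alpha> ^^ block_start \<alpha> Y ts s) x"
  obtain s' where s': "s' < length ts" "?R s' \<le> j" "j < ?R s' + ?r s'"
    using blocks_cover[OF dc j] by blast
  obtain b' c' where b': "b' \<in> Dsp P \<alpha> (?r s') (?y s')" and c': "c' \<in> fibn P \<alpha> (?R s') x"
    and single: "dvec_single j v = inj_comp (?R s') (?r s') b' c'"
    using dvec_single_eq_inj_comp[OF v s'(2,3)] by blast
  have \<sigma>_single: "\<sigma> k x (dvec_single j v) = inj_comp (?R s') (?r s') (\<sigma> (ts ! s') (?y s') b') c'"
    using \<sigma> k x dc s'(1) b' c' unfolding single bdp_iff_blocks by blast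
  show ?thesis
  proof (cases "s' = s")
    case True
    have le: "?R s + ?r s \<le> rr \<alpha> Y k"
      using dc s by (rule block_end_le)
    have "ipD (rr \<alpha> Y k) (\<sigma> k x (dvec_single j v)) (inj_comp (?R s) (?r s) b c)
        = ipD (?r s) (\<sigma> (ts ! s) (?y s) b') b * ipTens (?R s) c' c"
      unfolding \<sigma>_single True by (rule ipD_inj_comp[OF le])
    also have "\<dots> = ipD (?r s) b' B * ipTens (?R s) c' c"
      using adjoint b' True by simp
    also have "\<dots> = ipD (rr \<alpha> Y k) (dvec_single j v) (inj_comp (?R s) (?r s) B c)"
      unfolding single True by (rule ipD_inj_comp[OF le, symmetric])
    finally show ?thesis .
  next
    case False
    then show ?thesis
      using blocks_disjoint[OF dc s'(1) s] by (simp only: \<sigma>_single) (simp add: single ipD_inj_comp_disjoint)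
  qed
qed

context bundle_orbit
begin

lemma tendsto_piImg_lim_coordinate:
  assumes g: "\<And>n. fibrewise_linear P \<alpha> Y (g n)"
    and h: "\<forall>k\<in>{1..KK \<alpha> Y}. \<forall>x\<in>closure (Yk \<alpha> Y k). \<forall>a\<in>Dsp P \<alpha> (rr \<alpha> Y k) x.
        h k x a \<in> Dsp P \<alpha> (rr \<alpha> Y k) x"
    and conv: "\<forall>e>0. \<exists>N. \<forall>n\<ge>N. \<forall>k\<in>{1..KK \<alpha> Y}. \<forall>x\<in>closure (Yk \<alpha> Y k). \<forall>a\<in>Dsp P \<alpha> (rr \<alpha> Y k) x.
        normD (rr \<alpha> Y k) (\<lambda>j l. g n k x a j l - h k x a j l) \<le> e * normD (rr \<alpha> Y k) a"
    and kxa: "k \<in> {1..KK \<alpha> Y}" "x \<in> closure (Yk \<alpha> Y k)" "a \<in> Dsp P \<alpha> (rr \<alpha> Y k) x"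
  shows "(\<lambda>n. g n k x a j l) \<longlonglongrightarrow> h k x a j l"
proof (cases "j < rr \<alpha> Y k \<and> length l = j")
  case True
  have "\<forall>e>0. \<exists>N. \<forall>n\<ge>N. normD (rr \<alpha> Y k) (\<lambda>j l. g n k x a j l - h k x a j l) \<le> e * normD (rr \<alpha> Y k) a"
    using conv kxa by blast
  with True show ?thesis
    by (intro tendsto_coordinate_of_normD) auto
next
  case False
  then have "g n k x a j l = 0" for n
    using Dsp_eq_0[OF fibrewise_linearD(1)[OF g kxa]] by auto
  moreover have "h k x a j l = 0"
    using Dsp_eq_0 h kxa False by (meson not_le)
  ultimately show ?thesis
    by simp
qed

lemma fibrewise_linear_piE:
  assumes \<xi>: "\<xi> \<in> EY X P \<alpha> Y"
  shows "fibrewise_linear P \<alpha> Y (piE \<alpha> Y \<xi>)"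
proof (rule fibrewise_linearI, intro conjI ballI)
  fix k x a
  assume x: "x \<in> closure (Yk \<alpha> Y k)" and a: "a \<in> Dsp P \<alpha> (rr \<alpha> Y k) x"
  have "vtens (\<xi> ((\<alpha> ^^ (j - 1)) x)) (a (j - 1)) \<in> fibn P \<alpha> j x" if "0 < j" "j < rr \<alpha> Y k" for j
  proof -
    have "vtens (\<xi> ((\<alpha> ^^ (j - 1)) x)) (a (j - 1)) \<in> fibn P \<alpha> (Suc (j - 1)) x"
      using a that closure_Yk_subset x
      by (intro fibn_vtens EY_in_fibre[OF \<xi>] funpow_in_X) (auto simp: Dsp_iff)
    then show ?thesis
      using \<open>0 < j\<close> by simp
  qed
  then show "piE \<alpha> Y \<xi> k x a \<in> Dsp P \<alpha> (rr \<alpha> Y k) x"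
    unfolding Dsp_iff piE_def by (auto simp: fibn_zero)
next
  fix k x
  show "dlinear_on (Dsp P \<alpha> (rr \<alpha> Y k) x) (piE \<alpha> Y \<xi> k x)"
    unfolding dlinear_on_def piE_def by (auto simp: fun_eq_iff vtens_add vtens_smult)
qed

lemma fibrewise_linear_add:
  assumes \<sigma>: "fibrewise_linear P \<alpha> Y \<sigma>" and \<tau>: "fibrewise_linear P \<alpha> Y \<tau>"
  shows "fibrewise_linear P \<alpha> Y (\<lambda>k x a j l. \<sigma> k x a j l + \<tau> k x a j l)"
proof (rule fibrewise_linearI)
  fix k x
  assume k: "k \<in> {1..KK \<alpha> Y}" and x: "x \<in> closure (Yk \<alpha> Y k)"
  then have "x \<in> X"
    using closure_Yk_subset by blast
  note \<sigma>x = fibrewise_linearD[OF \<sigma> k x] and \<tau>x = fibrewise_linearD[OF \<tau> k x]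
  show "(\<forall>a\<in>Dsp P \<alpha> (rr \<alpha> Y k) x. (\<lambda>j l. \<sigma> k x a j l + \<tau> k x a j l) \<in> Dsp P \<alpha> (rr \<alpha> Y k) x) \<and>
      dlinear_on (Dsp P \<alpha> (rr \<alpha> Y k) x) (\<lambda>a j l. \<sigma> k x a j l + \<tau> k x a j l)"
    unfolding dlinear_on_def
    by (auto simp: Dsp_add[OF \<open>x \<in> X\<close> \<sigma>x(1) \<tau>x(1)] dlinear_onD[OF \<sigma>x(2)] dlinear_onD[OF \<tau>x(2)]
        algebra_simps)
qed

lemma fibrewise_linear_smult:
  assumes \<sigma>: "fibrewise_linear P \<alpha> Y \<sigma>"
  shows "fibrewise_linear P \<alpha> Y (\<lambda>k x a j l. c * \<sigma> k x a j l)"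
proof (rule fibrewise_linearI)
  fix k x
  assume k: "k \<in> {1..KK \<alpha> Y}" and x: "x \<in> closure (Yk \<alpha> Y k)"
  then have "x \<in> X"
    using closure_Yk_subset by blast
  note \<sigma>x = fibrewise_linearD[OF \<sigma> k x]
  show "(\<forall>a\<in>Dsp P \<alpha> (rr \<alpha> Y k) x. (\<lambda>j l. c * \<sigma> k x a j l) \<in> Dsp P \<alpha> (rr \<alpha> Y k) x) \<and>
      dlinear_on (Dsp P \<alpha> (rr \<alpha> Y k) x) (\<lambda>a j l. c * \<sigma> k x a j l)"
    unfolding dlinear_on_def
    by (auto simp: Dsp_smult[OF \<open>x \<in> X\<close> \<sigma>x(1)] dlinear_onD[OF \<sigma>x(2)] algebra_simps)
qed

lemma fibrewise_linear_adjD: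
  assumes \<sigma>: "fibrewise_linear P \<alpha> Y \<sigma>"
  shows "fibrewise_linear P \<alpha> Y (\<lambda>k x. adjD P \<alpha> (rr \<alpha> Y k) x (\<sigma> k x))"
proof (rule fibrewise_linearI)
  fix k x
  assume k: "k \<in> {1..KK \<alpha> Y}" and x: "x \<in> closure (Yk \<alpha> Y k)"
  let ?r = "rr \<alpha> Y k"
  let ?D = "Dsp P \<alpha> ?r x" and ?A = "adjD P \<alpha> ?r x (\<sigma> k x)"
  have xX: "x \<in> X"
    using closure_Yk_subset x by blast
  have maps: "\<forall>a\<in>?D. \<sigma> k x a \<in> ?D"
    using fibrewise_linearD(1)[OF \<sigma> k x] by blast
  note adj = adjD_Dsp[OF xX maps fibrewise_linearD(2)[OF \<sigma> k x]]
  note adj_eqI = adjD_Dsp_eqI[OF xX maps fibrewise_linearD(2)[OF \<sigma> k x]]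
  have "?A (\<lambda>j l. a j l + b j l) = (\<lambda>j l. ?A a j l + ?A b j l)" if a: "a \<in> ?D" and b: "b \<in> ?D" for a b
  proof (rule adj_eqI)
    show "(\<lambda>j l. a j l + b j l) \<in> ?D"
      by (rule Dsp_add[OF xX a b])
    show "(\<lambda>j l. ?A a j l + ?A b j l) \<in> ?D"
      by (rule Dsp_add[OF xX adj(1)[OF a] adj(1)[OF b]])
    show "ipD ?r (\<sigma> k x c) (\<lambda>j l. a j l + b j l) = ipD ?r c (\<lambda>j l. ?A a j l + ?A b j l)" if "c \<in> ?D" for c
      using adj(2)[OF a that] adj(2)[OF b that] by (simp only: ipD_add_right)
  qed
  moreover have "?A (\<lambda>j l. c * a j l) = (\<lambda>j l. c * ?A a j l)" if a: "a \<in> ?D" for a c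
  proof (rule adj_eqI)
    show "(\<lambda>j l. c * a j l) \<in> ?D"
      by (rule Dsp_smult[OF xX a])
    show "(\<lambda>j l. c * ?A a j l) \<in> ?D"
      by (rule Dsp_smult[OF xX adj(1)[OF a]])
    show "ipD ?r (\<sigma> k x c') (\<lambda>j l. c * a j l) = ipD ?r c' (\<lambda>j l. c * ?A a j l)" if "c' \<in> ?D" for c'
      using adj(2)[OF a that] by (simp only: ipD_smult_right)
  qed
  ultimately show "(\<forall>a\<in>?D. ?A a \<in> ?D) \<and> dlinear_on ?D ?A"
    using adj(1) unfolding dlinear_on_def by blast
qed

lemma fibrewise_linear_lim:
  fixes g :: "nat \<Rightarrow> ('a, 'n) fam"
  assumes g: "\<And>n. fibrewise_linear P \<alpha> Y (g n)"
    and h: "\<forall>k\<in>{1..KK \<alpha> Y}. \<forall>x\<in>closure (Yk \<alpha> Y k). \<forall>a\<in>Dsp P \<alpha> (rr \<alpha> Y k) x.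
        h k x a \<in> Dsp P \<alpha> (rr \<alpha> Y k) x"
    and conv: "\<forall>e>0. \<exists>N. \<forall>n\<ge>N. \<forall>k\<in>{1..KK \<alpha> Y}. \<forall>x\<in>closure (Yk \<alpha> Y k). \<forall>a\<in>Dsp P \<alpha> (rr \<alpha> Y k) x.
        normD (rr \<alpha> Y k) (\<lambda>j l. g n k x a j l - h k x a j l) \<le> e * normD (rr \<alpha> Y k) a"
  shows "fibrewise_linear P \<alpha> Y h"
proof (rule fibrewise_linearI)
  fix k x
  assume k: "k \<in> {1..KK \<alpha> Y}" and x: "x \<in> closure (Yk \<alpha> Y k)"
  let ?D = "Dsp P \<alpha> (rr \<alpha> Y k) x"
  have xX: "x \<in> X"
    using closure_Yk_subset x by blast
  note lim = tendsto_piImg_lim_coordinate[OF g h conv k x]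
  note g_lin = dlinear_onD[OF fibrewise_linearD(2)[OF g k x]]
  have "h k x (\<lambda>j l. a j l + b j l) = (\<lambda>j l. h k x a j l + h k x b j l)" if a: "a \<in> ?D" and b: "b \<in> ?D" for a b
  proof (intro ext)
    fix j l
    have "(\<lambda>n. g n k x (\<lambda>j l. a j l + b j l) j l) \<longlonglongrightarrow> h k x a j l + h k x b j l"
      unfolding g_lin(1)[OF a b] by (intro tendsto_add lim a b)
    with lim[OF Dsp_add[OF xX a b]] show "h k x (\<lambda>j l. a j l + b j l) j l = h k x a j l + h k x b j l"
      by (rule LIMSEQ_unique)
  qed
  moreover have "h k x (\<lambda>j l. c * a j l) = (\<lambda>j l. c * h k x a j l)" if a: "a \<in> ?D" for a c
  proof (intro ext)
    fix j l
    have "(\<lambda>n. g n k x (\<lambda>j l. c * a j l) j l) \<longlonglongrightarrow> c * h k x a j l"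
      unfolding g_lin(2)[OF a] by (intro tendsto_mult_left lim a)
    with lim[OF Dsp_smult[OF xX a]] show "h k x (\<lambda>j l. c * a j l) j l = c * h k x a j l"
      by (rule LIMSEQ_unique)
  qed
  ultimately show "(\<forall>a\<in>?D. h k x a \<in> ?D) \<and> dlinear_on ?D (h k x)"
    using h k x unfolding dlinear_on_def by blast
qed

lemma piImg_fibrewise_linear: "\<sigma> \<in> piImg P \<alpha> X Y \<Longrightarrow> fibrewise_linear P \<alpha> Y \<sigma>"
proof (induction rule: piImg.induct)
  case (gen_C f)
  show ?case by (rule fibrewise_linear_piC)
next
  case (gen_E \<xi>)
  then show ?case by (rule fibrewise_linear_piE)
next
  case (add \<sigma> \<tau>)
  show ?case by (rule fibrewise_linear_add[OF add.IH])
next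
  case (smult \<sigma> c)
  show ?case by (rule fibrewise_linear_smult[OF smult.IH])
next
  case (comp \<sigma> \<tau>)
  show ?case by (rule fibrewise_linear_comp[OF comp.IH])
next
  case (adj \<sigma>)
  show ?case by (rule fibrewise_linear_adjD[OF adj.IH])
next
  case (lim g h)
  show ?case by (rule fibrewise_linear_lim[OF lim.IH lim.hyps(2,3)])
qed

end


context bundle_orbit
begin

lemma bdp_adjD:
  assumes \<sigma>: "fibrewise_linear P \<alpha> Y \<sigma>" "bdp P \<alpha> Y \<sigma>"
  shows "bdp P \<alpha> Y (\<lambda>k x. adjD P \<alpha> (rr \<alpha> Y k) x (\<sigma> k x))"
  unfolding bdp_iff_blocks
proof (intro allI impI)
  fix k x ts s b c
  let ?R = "block_start \<alpha> Y ts s" and ?r = "rr \<alpha> Y (ts ! s)" and ?y = "(\<alpha> ^^ block_start \<alpha> Y ts s) x"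
  assume k: "k \<in> {1..KK \<alpha> Y}" and x: "x \<in> closure (Yk \<alpha> Y k) - Yk \<alpha> Y k"
    and dc: "boundary_decomp \<alpha> Y k x ts" and s: "s < length ts"
    and b: "b \<in> Dsp P \<alpha> ?r ?y" and c: "c \<in> fibn P \<alpha> ?R x"
  have t: "ts ! s \<in> {1..KK \<alpha> Y}" and y: "?y \<in> closure (Yk \<alpha> Y (ts ! s))"
    using block_index[OF dc k s] block_point_in_closure[OF dc s] .
  have xc: "x \<in> closure (Yk \<alpha> Y k)"
    using x by blast
  have xX: "x \<in> X" and yX: "?y \<in> X"
    using closure_Yk_subset xc y by blast+
  have le: "?R + ?r \<le> rr \<alpha> Y k"
    using dc s by (rule block_end_le)
  have maps_x: "\<forall>a\<in>Dsp P \<alpha> (rr \<alpha> Y k) x. \<sigma> k x a \<in> Dsp P \<alpha> (rr \<alpha> Y k) x"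
    and maps_y: "\<forall>a\<in>Dsp P \<alpha> ?r ?y. \<sigma> (ts ! s) ?y a \<in> Dsp P \<alpha> ?r ?y"
    using fibrewise_linearD(1)[OF \<sigma>(1) k xc] fibrewise_linearD(1)[OF \<sigma>(1) t y] by blast+
  note lin_x = fibrewise_linearD(2)[OF \<sigma>(1) k xc] and lin_y = fibrewise_linearD(2)[OF \<sigma>(1) t y]
  define B where "B = adjD P \<alpha> ?r ?y (\<sigma> (ts ! s) ?y) b"
  have B: "B \<in> Dsp P \<alpha> ?r ?y" "\<And>b'. b' \<in> Dsp P \<alpha> ?r ?y \<Longrightarrow> ipD ?r (\<sigma> (ts ! s) ?y b') b = ipD ?r b' B"
    unfolding B_def using adjD_Dsp[OF yX maps_y lin_y b] by blast+
  show "adjD P \<alpha> (rr \<alpha> Y k) x (\<sigma> k x) (inj_comp ?R ?r b c) = inj_comp ?R ?r (adjD P \<alpha> ?r ?y (\<sigma> (ts ! s) ?y) b) c"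
    unfolding B_def[symmetric]
  proof (rule adjD_Dsp_eqI[OF xX maps_x lin_x])
    show "inj_comp ?R ?r b c \<in> Dsp P \<alpha> (rr \<alpha> Y k) x" "inj_comp ?R ?r B c \<in> Dsp P \<alpha> (rr \<alpha> Y k) x"
      using inj_comp_in_Dsp[OF b c le] inj_comp_in_Dsp[OF B(1) c le] .
    show "ipD (rr \<alpha> Y k) (\<sigma> k x c') (inj_comp ?R ?r b c) = ipD (rr \<alpha> Y k) c' (inj_comp ?R ?r B c)"
      if "c' \<in> Dsp P \<alpha> (rr \<alpha> Y k) x" for c'
      using ipD_eq_on_Dsp_by_singles[OF xX lin_x ipD_single_block_adjoint[OF \<sigma>(2) k x dc s B(2)] that] .
  qed
qed

lemma bdp_lim:
  fixes g :: "nat \<Rightarrow> ('a, 'n) fam"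
  assumes g: "\<And>n. fibrewise_linear P \<alpha> Y (g n)" "\<And>n. bdp P \<alpha> Y (g n)"
    and h: "\<forall>k\<in>{1..KK \<alpha> Y}. \<forall>x\<in>closure (Yk \<alpha> Y k). \<forall>a\<in>Dsp P \<alpha> (rr \<alpha> Y k) x.
        h k x a \<in> Dsp P \<alpha> (rr \<alpha> Y k) x"
    and conv: "\<forall>e>0. \<exists>N. \<forall>n\<ge>N. \<forall>k\<in>{1..KK \<alpha> Y}. \<forall>x\<in>closure (Yk \<alpha> Y k). \<forall>a\<in>Dsp P \<alpha> (rr \<alpha> Y k) x.
        normD (rr \<alpha> Y k) (\<lambda>j l. g n k x a j l - h k x a j l) \<le> e * normD (rr \<alpha> Y k) a"
  shows "bdp P \<alpha> Y h"
  unfolding bdp_iff_blocks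
proof (intro allI impI ext)
  fix k x ts s b c j l
  let ?R = "block_start \<alpha> Y ts s" and ?r = "rr \<alpha> Y (ts ! s)" and ?y = "(\<alpha> ^^ block_start \<alpha> Y ts s) x"
  assume k: "k \<in> {1..KK \<alpha> Y}" and x: "x \<in> closure (Yk \<alpha> Y k) - Yk \<alpha> Y k"
    and dc: "boundary_decomp \<alpha> Y k x ts" and s: "s < length ts"
    and b: "b \<in> Dsp P \<alpha> ?r ?y" and c: "c \<in> fibn P \<alpha> ?R x"
  note lim = tendsto_piImg_lim_coordinate[OF g(1) h conv]
  have xc: "x \<in> closure (Yk \<alpha> Y k)"
    using x by blast
  have "(\<lambda>n. g n k x (inj_comp ?R ?r b c) j l) \<longlonglongrightarrow> h k x (inj_comp ?R ?r b c) j l"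
    using lim[OF k xc inj_comp_in_Dsp[OF b c block_end_le[OF dc s]]] .
  moreover have "g n k x (inj_comp ?R ?r b c) = inj_comp ?R ?r (g n (ts ! s) ?y b) c" for n
    using g(2)[of n] k x dc s b c unfolding bdp_iff_blocks by blast
  moreover have "(\<lambda>n. inj_comp ?R ?r (g n (ts ! s) ?y b) c j l) \<longlonglongrightarrow> inj_comp ?R ?r (h (ts ! s) ?y b) c j l"
  proof (cases "?R \<le> j \<and> j < ?R + ?r \<and> ?R \<le> length l")
    case True
    show ?thesis
      unfolding inj_comp_apply if_P[OF True]
      by (intro tendsto_mult_right lim[OF block_index[OF dc k s] block_point_in_closure[OF dc s] b])
  next
    case False
    show ?thesis
      unfolding inj_comp_apply if_not_P[OF False] by simp
  qed
  ultimately show "h k x (inj_comp ?R ?r b c) j l = inj_comp ?R ?r (h (ts ! s) ?y b) c j l"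
    by (simp add: LIMSEQ_unique)
qed

lemma piImg_bdp: "\<sigma> \<in> piImg P \<alpha> X Y \<Longrightarrow> bdp P \<alpha> Y \<sigma>"
proof (induction rule: piImg.induct)
  case (gen_C f)
  show ?case by (rule bdp_piC)
next
  case (gen_E \<xi>)
  then show ?case by (rule bdp_piE)
next
  case (add \<sigma> \<tau>)
  then show ?case by (intro bdp_add)
next
  case (smult \<sigma> c)
  then show ?case by (intro bdp_smult)
next
  case (comp \<sigma> \<tau>)
  show ?case by (rule bdp_comp[OF comp.IH piImg_fibrewise_linear[OF comp.hyps(2)]])
next
  case (adj \<sigma>)
  show ?case by (rule bdp_adjD[OF piImg_fibrewise_linear[OF adj.hyps] adj.IH])
next
  case (lim g h)
  show ?case by (rule bdp_lim[OF piImg_fibrewise_linear[OF lim.hyps(1)] lim.IH lim.hyps(2,3)])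
qed

end

theorem lemma8p2:
  fixes X :: "'a::metric_space set" and \<alpha> :: "'a \<Rightarrow> 'a"
    and P :: "'a \<Rightarrow> complex^'n::finite^'n" and Y :: "'a set"
    and \<sigma> :: "('a, 'n) fam"
  assumes "compact X" and "infinite X" and "minimal_homeo X \<alpha>"
    and "line_bundle_proj X P"
    and "Y \<subseteq> X" and "closedin (top_of_set X) Y"
    and "\<exists>U. openin (top_of_set X) U \<and> U \<noteq> {} \<and> U \<subseteq> Y"
    and "\<sigma> \<in> piImg P \<alpha> X Y"
  shows "bdp P \<alpha> Y \<sigma>"
proof -
  obtain \<beta> where "homeomorphism X X \<alpha> \<beta>"
    using assms(3) unfolding minimal_homeo_def by blast
  then have "\<alpha> ` X \<subseteq> X"
    unfolding homeomorphism_def by blast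
  then interpret bundle_orbit X P \<alpha> Y
    using assms(1,4,5) by unfold_locales (auto intro: compact_imp_closed)
  show ?thesis
    using assms(8) by (rule piImg_bdp)
qed

end
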